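(* For every $i\in\{2,\dots,k+1\}$, the volumes $|D''_i(y'')|$ and $|D_i(y)|$ do not depend on $y\in C_{i-1}$; denoting them $|D''_i|$ and $|D_i|$, $$\lim_{d\to+\infty}\frac1d\ln\frac{|D''_i|}{v_{d-2}}=\lim_{d\to+\infty}\frac1d\ln\frac{|D_i|}{v_d}=\ln\big(r_i\sqrt{1-a_i^2}\big).$$
   Context: Fix $\rho>1$, an integer $k\ge1$, $\kappa\in(\kappa^c_\rho(k),1)$, and $(a_i)_{2\le i\le k+1}\in(0,1)^k$ satisfying $1<\kappa^{k+1}\frac{(1+\rho)^2}{4\rho}\sqrt{\prod_{2\le j\le k+1}(1-a_j^2)}<\kappa\frac{d_{k+1}}{2\rho}$, where $r_1=r_{k+1}=1+\rho$, $r_i=2$ for $2\le i\le k$, $d_1=1+\rho$, $d_i^2=d_{i-1}^2+2r_ia_id_{i-1}+r_i^2$ ($d_i>0$), and $\kappa^c_\rho(k)=\inf_{0\le a_i<1}\max\big((4\rho/((1+\rho)^2\sqrt{\prod_{2\le i\le k+1}(1-a_i^2)}))^{1/(k+1)},\,2\rho/d_{k+1}\big)$. For $d\ge3$ let $v_m$ be the volume of the unit ball of $\mathbb{R}^m$, $|\cdot|$ Lebesgue measure, $B''(c,r)$ the open ball of $\mathbb{R}^{d-2}$, and write $x=(x',x'')\in\mathbb{R}^2\times\mathbb{R}^{d-2}$. Set $D'_0=(-d^{-1/2},d^{-1/2})\times(-d^{-1/2},0)$, $D'_i=(0,d^{-1/2})^2$ for $i\ge1$; $C''_0=\{0\}$,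 $C''_i=B''(0,d_i-2d^{-1})\setminus B''(0,d_i-3d^{-1})$ for $i\ge1$; $C_i=D'_i\times C''_i$. For $2\le i\le k+1$ and $d$ large, $\theta_i\in(0,\pi/2)$ is given by $\cos\theta_i=\frac{d_{i-1}+a_ir_i}{d_i}+d^{-1/2}$; for $y\in C_{i-1}$, $D''_i(y'')=\{z''\in C''_i:\langle z'',y''\rangle\ge\|y''\|\|z''\|\cos\theta_i\}$ and $D_i(y)=D'_i\times D''_i(y'')$. *)

theory Defs
  imports "HOL-Analysis.Analysis"
begin

definition rr :: "real \<Rightarrow> nat \<Rightarrow> nat \<Rightarrow> real" where
  "rr \<rho> k i = (if i = 1 \<or> i = k + 1 then 1 + \<rho> else 2)"

text \<open>Distances d_i: d_1 = 1 + rho, d_i = sqrt(d_{i-1}^2 + 2 r_i a_i d_{i-1} + r_i^2).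
  (The value at index 0 is unused.)\<close>
fun dd :: "real \<Rightarrow> nat \<Rightarrow> (nat \<Rightarrow> real) \<Rightarrow> nat \<Rightarrow> real" where
  "dd \<rho> k a 0 = 0"
| "dd \<rho> k a (Suc 0) = 1 + \<rho>"
| "dd \<rho> k a (Suc (Suc n)) =
     (let p = dd \<rho> k a (Suc n); i = Suc (Suc n)
      in sqrt (p\<^sup>2 + 2 * rr \<rho> k i * a i * p + (rr \<rho> k i)\<^sup>2))"

definition kappa_c :: "real \<Rightarrow> nat \<Rightarrow> real" where
  "kappa_c \<rho> k =
     (INF a \<in> {a. \<forall>i\<in>{2..k+1}. 0 \<le> a i \<and> a i < 1}.
        max (root (k + 1) (4 * \<rho> / ((1 + \<rho>)\<^sup>2 * sqrt (\<Prod>i\<in>{2..k+1}. 1 - (a i)\<^sup>2))))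
            (2 * \<rho> / dd \<rho> k a (k + 1)))"

definition Rsp :: "nat \<Rightarrow> (nat \<Rightarrow> real) set" where
  "Rsp m = PiE {..<m} (\<lambda>_. UNIV)"

definition lebm :: "nat \<Rightarrow> (nat \<Rightarrow> real) measure" where
  "lebm m = PiM {..<m} (\<lambda>_. lborel)"

definition vol :: "nat \<Rightarrow> (nat \<Rightarrow> real) set \<Rightarrow> real" where
  "vol m S = measure (lebm m) S"

definition enorm :: "nat \<Rightarrow> (nat \<Rightarrow> real) \<Rightarrow> real" where
  "enorm m x = sqrt (\<Sum>j<m. (x j)\<^sup>2)"

definition einner :: "nat \<Rightarrow> (nat \<Rightarrow> real) \<Rightarrow> (nat \<Rightarrow> real) \<Rightarrow> real" where
  "einner m x y = (\<Sum>j<m. x j * y j)"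

definition oball0 :: "nat \<Rightarrow> real \<Rightarrow> (nat \<Rightarrow> real) set" where
  "oball0 m r = {x \<in> Rsp m. enorm m x < r}"

definition vball :: "nat \<Rightarrow> real" where
  "vball m = vol m (oball0 m 1)"

definition xp :: "(nat \<Rightarrow> real) \<Rightarrow> real \<times> real" where
  "xp x = (x 0, x 1)"

definition xpp :: "nat \<Rightarrow> (nat \<Rightarrow> real) \<Rightarrow> (nat \<Rightarrow> real)" where
  "xpp n x = restrict (\<lambda>j. x (j + 2)) {..<n - 2}"

definition Dp :: "nat \<Rightarrow> nat \<Rightarrow> (real \<times> real) set" where
  "Dp n i = (if i = 0
     then {- 1 / sqrt (real n) <..< 1 / sqrt (real n)} \<times> {- 1 / sqrt (real n) <..< 0}
     else {0 <..< 1 / sqrt (real n)} \<times> {0 <..< 1 / sqrt (real n)})"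

definition Cpp :: "real \<Rightarrow> nat \<Rightarrow> (nat \<Rightarrow> real) \<Rightarrow> nat \<Rightarrow> nat \<Rightarrow> (nat \<Rightarrow> real) set" where
  "Cpp \<rho> k a n i = (if i = 0 then {restrict (\<lambda>_. 0) {..<n - 2}}
     else oball0 (n - 2) (dd \<rho> k a i - 2 / real n) - oball0 (n - 2) (dd \<rho> k a i - 3 / real n))"

definition CC :: "real \<Rightarrow> nat \<Rightarrow> (nat \<Rightarrow> real) \<Rightarrow> nat \<Rightarrow> nat \<Rightarrow> (nat \<Rightarrow> real) set" where
  "CC \<rho> k a n i = {x \<in> Rsp n. xp x \<in> Dp n i \<and> xpp n x \<in> Cpp \<rho> k a n i}"

definition costh :: "real \<Rightarrow> nat \<Rightarrow> (nat \<Rightarrow> real) \<Rightarrow> nat \<Rightarrow> nat \<Rightarrow> real" where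
  "costh \<rho> k a n i = (dd \<rho> k a (i - 1) + a i * rr \<rho> k i) / dd \<rho> k a i + 1 / sqrt (real n)"

definition Dpp :: "real \<Rightarrow> nat \<Rightarrow> (nat \<Rightarrow> real) \<Rightarrow> nat \<Rightarrow> nat \<Rightarrow> (nat \<Rightarrow> real) \<Rightarrow> (nat \<Rightarrow> real) set" where
  "Dpp \<rho> k a n i ypp = {z \<in> Cpp \<rho> k a n i.
      einner (n - 2) z ypp \<ge> enorm (n - 2) ypp * enorm (n - 2) z * costh \<rho> k a n i}"

definition DD :: "real \<Rightarrow> nat \<Rightarrow> (nat \<Rightarrow> real) \<Rightarrow> nat \<Rightarrow> nat \<Rightarrow> (nat \<Rightarrow> real) \<Rightarrow> (nat \<Rightarrow> real) set" where
  "DD \<rho> k a n i y = {x \<in> Rsp n. xp x \<in> Dp n i \<and> xpp n x \<in> Dpp \<rho> k a n i (xpp n y)}"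

end

theory Submission
  imports Defs
begin

text \<open>The volume of \<open>D''\<^sub>i(y'')\<close> is invariant under rotations of \<open>\<real>\<^sup>d\<^sup>-\<^sup>2\<close>, which preserve Lebesgue
  measure because every plane rotation is a product of shears; so it does not depend on
  \<open>y'' \<noteq> 0\<close>, and we may take \<open>y''\<close> on a coordinate axis. There the set is squeezed between a
  tiny box times a thin spherical shell and a box times a ball, both of radius about
  \<open>\<beta> = d\<^sub>i sin \<theta>\<close> where \<open>cos \<theta> = (d\<^sub>i\<^sub>-\<^sub>1 + a\<^sub>i r\<^sub>i) / d\<^sub>i\<close>. Their volumes are \<open>v\<^sub>d\<^sub>-\<^sub>2 \<beta>\<^sup>d\<close> up to
  factors of polynomial size in \<open>d\<close>, which are invisible after \<open>(1/d) ln\<close>, and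
  \<open>d\<^sub>i sin \<theta> = r\<^sub>i \<surd>(1 - a\<^sub>i\<^sup>2)\<close>. Finally \<open>D\<^sub>i(y) = D'\<^sub>i \<times> D''\<^sub>i(y'')\<close> only adds the factor \<open>1/d\<close>.\<close>

section \<open>Plane rotations preserve Lebesgue measure\<close>

abbreviation lborel_Pi :: "nat set \<Rightarrow> (nat \<Rightarrow> real) measure" where
  "lborel_Pi A \<equiv> PiM A (\<lambda>_. lborel)"

lemma measurable_fun_upd_PiM:
  assumes "a \<in> A" and [measurable]: "g \<in> borel_measurable (lborel_Pi A)"
  shows "(\<lambda>z. z(a := g z)) \<in> lborel_Pi A \<rightarrow>\<^sub>M lborel_Pi A"
proof -
  have "(\<lambda>z. z(a := g z)) = (\<lambda>z i. (\<lambda>i z. if i = a then g z else z i) i z)"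
    by (auto simp: fun_eq_iff)
  then show ?thesis
    using assms by (auto intro!: measurable_PiM_single' simp: space_PiM PiE_def extensional_def)
qed

lemma nn_integral_PiM_fun_upd_affine:
  assumes A: "finite A" "a \<in> A" and s: "\<bar>s\<bar> = 1"
    and g[measurable]: "g \<in> borel_measurable (lborel_Pi A)"
    and g_indep: "\<And>z x. g (z(a := x)) = g z"
    and f[measurable]: "f \<in> borel_measurable (lborel_Pi A)"
  shows "(\<integral>\<^sup>+ z. f (z(a := s * z a + g z)) \<partial>lborel_Pi A) = (\<integral>\<^sup>+ z. f z \<partial>lborel_Pi A)"
proof -
  interpret product_sigma_finite "\<lambda>_. lborel" by standard
  define J where "J = A - {a}"
  have J: "A = insert a J" "a \<notin> J" "finite J" using A by (auto simp: J_def)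
  have "(\<lambda>z. z(a := s * z a + g z)) \<in> lborel_Pi A \<rightarrow>\<^sub>M lborel_Pi A"
    using A(2) by (intro measurable_fun_upd_PiM) auto
  then have fg: "(\<lambda>z. f (z(a := s * z a + g z))) \<in> borel_measurable (lborel_Pi A)"
    by measurable
  have "(\<integral>\<^sup>+ z. f (z(a := s * z a + g z)) \<partial>lborel_Pi A)
      = (\<integral>\<^sup>+ x. (\<integral>\<^sup>+ y. f (x(a := g x + s * y)) \<partial>lborel) \<partial>lborel_Pi J)"
    using product_nn_integral_insert[OF J(3,2), of "\<lambda>z. f (z(a := s * z a + g z))"] fg J(1)
    by (auto simp: g_indep add.commute intro!: nn_integral_cong)
  also have "\<dots> = (\<integral>\<^sup>+ x. (\<integral>\<^sup>+ y. f (x(a := y)) \<partial>lborel) \<partial>lborel_Pi J)"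
  proof (rule nn_integral_cong)
    fix x assume "x \<in> space (lborel_Pi J)"
    then have "(\<lambda>y. f (x(a := y))) \<in> borel_measurable borel"
      using measurable_comp[OF measurable_component_update f[unfolded J(1)], OF _ J(2)]
      unfolding comp_def by simp
    then show "(\<integral>\<^sup>+ y. f (x(a := g x + s * y)) \<partial>lborel) = (\<integral>\<^sup>+ y. f (x(a := y)) \<partial>lborel)"
      using nn_integral_real_affine[of "\<lambda>y. f (x(a := y))" s "g x"] s by auto
  qed
  also have "\<dots> = (\<integral>\<^sup>+ z. f z \<partial>lborel_Pi A)"
    using product_nn_integral_insert[OF J(3,2) f[unfolded J(1)]] J(1) by simp
  finally show ?thesis .
qed

lemma measurable_shear_PiM [measurable]:
  "a \<in> A \<Longrightarrow> b \<in> A \<Longrightarrow> (\<lambda>z. z(a := z a + t * z b)) \<in> lborel_Pi A \<rightarrow>\<^sub>M lborel_Pi A"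
  by (rule measurable_fun_upd_PiM) measurable

lemma measurable_reflect_PiM [measurable]:
  "a \<in> A \<Longrightarrow> (\<lambda>z. z(a := - z a)) \<in> lborel_Pi A \<rightarrow>\<^sub>M lborel_Pi A"
  by (rule measurable_fun_upd_PiM) measurable

lemma nn_integral_PiM_shear:
  assumes "finite A" "a \<in> A" "b \<in> A" "a \<noteq> b" "f \<in> borel_measurable (lborel_Pi A)"
  shows "(\<integral>\<^sup>+ z. f (z(a := z a + t * z b)) \<partial>lborel_Pi A) = (\<integral>\<^sup>+ z. f z \<partial>lborel_Pi A)"
  using nn_integral_PiM_fun_upd_affine[of A a 1 "\<lambda>z. t * z b" f] assms by simp

lemma nn_integral_PiM_reflect:
  assumes "finite A" "a \<in> A" "f \<in> borel_measurable (lborel_Pi A)"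
  shows "(\<integral>\<^sup>+ z. f (z(a := - z a)) \<partial>lborel_Pi A) = (\<integral>\<^sup>+ z. f z \<partial>lborel_Pi A)"
  using nn_integral_PiM_fun_upd_affine[of A a "-1" "\<lambda>_. 0" f] assms by simp

definition plane_rot :: "nat \<Rightarrow> nat \<Rightarrow> real \<Rightarrow> real \<Rightarrow> (nat \<Rightarrow> real) \<Rightarrow> (nat \<Rightarrow> real)" where
  "plane_rot a b c s z = z(a := c * z a + s * z b, b := - s * z a + c * z b)"

lemma measurable_plane_rot [measurable]:
  assumes "a \<in> A" "b \<in> A" "a \<noteq> b"
  shows "plane_rot a b c s \<in> lborel_Pi A \<rightarrow>\<^sub>M lborel_Pi A"
proof -
  have "plane_rot a b c s = (\<lambda>z i. (\<lambda>i z. if i = a then c * z a + s * z b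
      else if i = b then - s * z a + c * z b else z i) i z)"
    using assms by (auto simp: plane_rot_def fun_eq_iff)
  then show ?thesis
    using assms by (auto intro!: measurable_PiM_single' simp: space_PiM PiE_def extensional_def)
qed

text \<open>With \<open>p = s / (1 + c) = tan (\<theta>/2)\<close> the rotation is the product of the shears by \<open>p\<close>,
  \<open>-s\<close>, \<open>p\<close>; the rotation by \<open>\<pi>\<close> is the product of two reflections.\<close>

lemma nn_integral_PiM_plane_rot:
  assumes A: "finite A" "a \<in> A" "b \<in> A" "a \<noteq> b" and cs: "c\<^sup>2 + s\<^sup>2 = 1"
    and f[measurable]: "f \<in> borel_measurable (lborel_Pi A)"
  shows "(\<integral>\<^sup>+ z. f (plane_rot a b c s z) \<partial>lborel_Pi A) = (\<integral>\<^sup>+ z. f z \<partial>lborel_Pi A)"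
proof (cases "c = -1")
  case True
  then have "s = 0" using cs by (simp add: power2_eq_square)
  then have rot: "plane_rot a b c s z = (\<lambda>z. z(a := - z a)) (z(b := - z b))" for z
    using True A by (auto simp: plane_rot_def fun_eq_iff)
  have "(\<lambda>z. f (z(a := - z a))) \<in> borel_measurable (lborel_Pi A)"
    using A by measurable
  then have "(\<integral>\<^sup>+ z. f (plane_rot a b c s z) \<partial>lborel_Pi A) = (\<integral>\<^sup>+ z. f (z(a := - z a)) \<partial>lborel_Pi A)"
    unfolding rot by (rule nn_integral_PiM_reflect[OF A(1,3)])
  also have "\<dots> = (\<integral>\<^sup>+ z. f z \<partial>lborel_Pi A)"
    by (rule nn_integral_PiM_reflect[OF A(1,2) f])
  finally show ?thesis .
next
  case False
  define p where "p = s / (1 + c)"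
  have "s\<^sup>2 = (1 - c) * (1 + c)" using cs by (simp add: algebra_simps power2_eq_square)
  then have pq1: "1 - p * s = c"
    using False by (auto simp: p_def field_simps power2_eq_square)
  then have "p * (1 - p * s) + p = p * (1 + c)"
    by (subst pq1[symmetric]) (simp add: algebra_simps)
  also have "\<dots> = s"
    using False by (simp add: p_def)
  finally have pq2: "p * (1 - p * s) + p = s" .
  note pq = pq1 pq2
  let ?U = "\<lambda>z. z(a := z a + p * z b)" and ?L = "\<lambda>z. z(b := z b + (- s) * z a)"
  have rot: "plane_rot a b c s z = ?U (?L (?U z))" for z
  proof -
    have "c * z a + s * z b - ((z a + p * z b) + p * (z b + (- s) * (z a + p * z b)))
        = (c - (1 - p * s)) * z a + (s - (p * (1 - p * s) + p)) * z b"
      by (simp add: algebra_simps)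
    moreover have "- s * z a + c * z b - (z b + (- s) * (z a + p * z b)) = (c - (1 - p * s)) * z b"
      by (simp add: algebra_simps)
    ultimately show ?thesis using A pq by (auto simp: plane_rot_def fun_eq_iff)
  qed
  have m1: "(\<lambda>z. f (?U z)) \<in> borel_measurable (lborel_Pi A)"
    and m2: "(\<lambda>z. f (?U (?L z))) \<in> borel_measurable (lborel_Pi A)"
    using A by measurable
  have "(\<integral>\<^sup>+ z. f (plane_rot a b c s z) \<partial>lborel_Pi A) = (\<integral>\<^sup>+ z. f (?U (?L z)) \<partial>lborel_Pi A)"
    unfolding rot by (rule nn_integral_PiM_shear[OF A m2])
  also have "\<dots> = (\<integral>\<^sup>+ z. f (?U z) \<partial>lborel_Pi A)"
    using A by (intro nn_integral_PiM_shear[OF A(1,3,2) _ m1]) auto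
  also have "\<dots> = (\<integral>\<^sup>+ z. f z \<partial>lborel_Pi A)"
    by (rule nn_integral_PiM_shear[OF A f])
  finally show ?thesis .
qed

section \<open>Cone shells\<close>

definition inner_on :: "nat set \<Rightarrow> (nat \<Rightarrow> real) \<Rightarrow> (nat \<Rightarrow> real) \<Rightarrow> real" where
  "inner_on A z u = (\<Sum>j\<in>A. z j * u j)"

definition norm_on :: "nat set \<Rightarrow> (nat \<Rightarrow> real) \<Rightarrow> real" where
  "norm_on A z = sqrt (inner_on A z z)"

lemma inner_on_restrict [simp]: "inner_on A (restrict z A) u = inner_on A z u"
  by (simp add: inner_on_def)

lemma norm_on_restrict [simp]: "norm_on A (restrict z A) = norm_on A z"
  by (simp add: norm_on_def inner_on_def)

text \<open>The part of the cone of half-angle \<open>arccos c\<close> around \<open>u\<close> with norms in \<open>S\<close>; the paper's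
  \<open>D''\<^sub>i(y'')\<close> is of this form.\<close>

definition cone_shell :: "nat set \<Rightarrow> real set \<Rightarrow> real \<Rightarrow> (nat \<Rightarrow> real) \<Rightarrow> (nat \<Rightarrow> real) set" where
  "cone_shell A S c u =
     {z \<in> space (lborel_Pi A). norm_on A z \<in> S \<and> norm_on A u * norm_on A z * c \<le> inner_on A z u}"

lemma sets_cone_shell [measurable]:
  assumes "finite A" and [measurable]: "S \<in> sets borel"
  shows "cone_shell A S c u \<in> sets (lborel_Pi A)"
proof -
  have [measurable]: "norm_on A \<in> borel_measurable (lborel_Pi A)"
    "(\<lambda>z. inner_on A z u - norm_on A u * norm_on A z * c) \<in> borel_measurable (lborel_Pi A)"
    using assms unfolding norm_on_def inner_on_def by measurable
  have "cone_shell A S c u = {z \<in> space (lborel_Pi A). norm_on A z \<in> S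
      \<and> inner_on A z u - norm_on A u * norm_on A z * c \<in> {0..}}"
    by (auto simp: cone_shell_def)
  also have "\<dots> \<in> sets (lborel_Pi A)"
    by measurable
  finally show ?thesis .
qed

lemma inner_on_plane_rot:
  assumes A: "finite A" "a \<in> A" "b \<in> A" "a \<noteq> b" and cs: "c\<^sup>2 + s\<^sup>2 = 1"
  shows "inner_on A (plane_rot a b c s z) (plane_rot a b c s u) = inner_on A z u"
proof -
  let ?R = "A - {a} - {b}"
  have "inner_on A (plane_rot a b c s z) (plane_rot a b c s u) = (c * z a + s * z b) * (c * u a + s * u b)
      + (- s * z a + c * z b) * (- s * u a + c * u b) + (\<Sum>j\<in>?R. z j * u j)"
    unfolding inner_on_def using A
    by (simp add: sum.remove[of A a] sum.remove[of "A - {a}" b] plane_rot_def)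
  also have "\<dots> = (c\<^sup>2 + s\<^sup>2) * (z a * u a + z b * u b) + (\<Sum>j\<in>?R. z j * u j)"
    by (simp add: algebra_simps power2_eq_square)
  also have "\<dots> = inner_on A z u"
    unfolding inner_on_def using A cs
    by (simp add: sum.remove[of A a] sum.remove[of "A - {a}" b])
  finally show ?thesis .
qed

lemma inner_on_reflect:
  "finite A \<Longrightarrow> a \<in> A \<Longrightarrow> inner_on A (z(a := - z a)) (u(a := - u a)) = inner_on A z u"
  unfolding inner_on_def by (simp add: sum.remove[of A a])

lemma emeasure_cone_shell_isometry:
  assumes A: "finite A" and S: "S \<in> sets borel"
    and T_meas: "T \<in> lborel_Pi A \<rightarrow>\<^sub>M lborel_Pi A"
    and T_nn_integral: "\<And>f. f \<in> borel_measurable (lborel_Pi A) \<Longrightarrow>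
      (\<integral>\<^sup>+ z. f (T z) \<partial>lborel_Pi A) = (\<integral>\<^sup>+ z. f z \<partial>lborel_Pi A)"
    and T_inner: "\<And>z w. inner_on A (T z) (T w) = inner_on A z w"
  shows "emeasure (lborel_Pi A) (cone_shell A S c (T u)) = emeasure (lborel_Pi A) (cone_shell A S c u)"
proof -
  have norm: "norm_on A (T z) = norm_on A z" for z
    using T_inner by (simp add: norm_on_def)
  have "emeasure (lborel_Pi A) (cone_shell A S c (T u))
      = (\<integral>\<^sup>+ z. indicator (cone_shell A S c (T u)) (T z) \<partial>lborel_Pi A)"
    using A S by (simp add: T_nn_integral)
  also have "\<dots> = (\<integral>\<^sup>+ z. indicator (cone_shell A S c u) z \<partial>lborel_Pi A)"
  proof (rule nn_integral_cong)
    fix z assume z: "z \<in> space (lborel_Pi A)"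
    then have "T z \<in> space (lborel_Pi A)"
      using T_meas by (rule measurable_space[rotated])
    then show "indicator (cone_shell A S c (T u)) (T z) = (indicator (cone_shell A S c u) z :: ennreal)"
      using z by (simp add: indicator_def cone_shell_def norm T_inner)
  qed
  also have "\<dots> = emeasure (lborel_Pi A) (cone_shell A S c u)"
    using A S by simp
  finally show ?thesis .
qed

lemma emeasure_cone_shell_plane_rot:
  assumes "finite A" "a \<in> A" "b \<in> A" "a \<noteq> b" "c\<^sup>2 + s\<^sup>2 = 1" "S \<in> sets borel"
  shows "emeasure (lborel_Pi A) (cone_shell A S c' (plane_rot a b c s u))
       = emeasure (lborel_Pi A) (cone_shell A S c' u)"
  using assms
  by (intro emeasure_cone_shell_isometry nn_integral_PiM_plane_rot inner_on_plane_rot) auto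

lemma emeasure_cone_shell_reflect:
  assumes "finite A" "a \<in> A" "S \<in> sets borel"
  shows "emeasure (lborel_Pi A) (cone_shell A S c (u(a := - u a)))
       = emeasure (lborel_Pi A) (cone_shell A S c u)"
  using assms
  by (intro emeasure_cone_shell_isometry[where T = "\<lambda>z. z(a := - z a)"]
        nn_integral_PiM_reflect inner_on_reflect) auto

lemma cone_shell_cong: "(\<And>i. i \<in> A \<Longrightarrow> u i = v i) \<Longrightarrow> cone_shell A S c u = cone_shell A S c v"
  unfolding cone_shell_def norm_on_def inner_on_def by (simp cong: sum.cong)

lemma cone_shell_scale:
  assumes "l > 0"
  shows "cone_shell A S c (\<lambda>i. l * u i) = cone_shell A S c u"
proof -
  have "inner_on A z (\<lambda>i. l * u i) = l * inner_on A z u" for z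
    unfolding inner_on_def by (simp add: sum_distrib_left algebra_simps)
  moreover have "norm_on A (\<lambda>i. l * u i) = l * norm_on A u"
    unfolding norm_on_def inner_on_def using assms
    by (simp add: sum_distrib_left[symmetric] algebra_simps real_sqrt_mult power2_eq_square[symmetric])
  ultimately show ?thesis
    unfolding cone_shell_def using assms by (auto simp: mult.assoc)
qed

lemma emeasure_cone_shell_axis:
  assumes A: "finite A" "j0 \<in> A" and S: "S \<in> sets borel"
    and off_axis: "\<And>j. j \<in> A \<Longrightarrow> j \<noteq> j0 \<Longrightarrow> u j = 0" and u: "norm_on A u > 0"
  shows "emeasure (lborel_Pi A) (cone_shell A S c u)
       = emeasure (lborel_Pi A) (cone_shell A S c (indicator {j0}))"
proof -
  have "u j0 \<noteq> 0"
  proof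
    assume "u j0 = 0"
    then have "inner_on A u u = 0"
      unfolding inner_on_def using off_axis by (intro sum.neutral) auto
    with u show False
      by (simp add: norm_on_def)
  qed
  have positive: "cone_shell A S c v = cone_shell A S c (indicator {j0})"
    if "\<And>j. j \<in> A \<Longrightarrow> j \<noteq> j0 \<Longrightarrow> v j = 0" "v j0 > 0" for v
  proof -
    have "cone_shell A S c v = cone_shell A S c (\<lambda>i. v j0 * indicator {j0} i)"
      by (rule cone_shell_cong) (use that in \<open>auto simp: indicator_def\<close>)
    also have "\<dots> = cone_shell A S c (indicator {j0})"
      by (rule cone_shell_scale) (use that in auto)
    finally show ?thesis .
  qed
  show ?thesis
  proof (cases "u j0 > 0")
    case True
    then have "cone_shell A S c u = cone_shell A S c (indicator {j0})"
      using off_axis by (intro positive) auto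
    then show ?thesis by simp
  next
    case False
    then have "cone_shell A S c (u(j0 := - u j0)) = cone_shell A S c (indicator {j0})"
      using off_axis \<open>u j0 \<noteq> 0\<close> by (intro positive) auto
    then show ?thesis using emeasure_cone_shell_reflect[OF A S, of c u] by simp
  qed
qed

lemma plane_rot_zero_coord:
  assumes "j \<noteq> j0" "u j \<noteq> 0"
  obtains c s where "c\<^sup>2 + s\<^sup>2 = 1" "plane_rot j0 j c s u j = 0"
    "\<And>i. i \<noteq> j0 \<Longrightarrow> i \<noteq> j \<Longrightarrow> plane_rot j0 j c s u i = u i"
proof -
  define r where "r = sqrt ((u j0)\<^sup>2 + (u j)\<^sup>2)"
  have r: "r > 0" "r\<^sup>2 = (u j0)\<^sup>2 + (u j)\<^sup>2"
    using assms(2) by (simp_all add: r_def add_nonneg_pos)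
  have "(u j0 / r)\<^sup>2 + (u j / r)\<^sup>2 = 1"
    using r assms(2) by (simp add: power_divide add_divide_distrib[symmetric])
  moreover have "plane_rot j0 j (u j0 / r) (u j / r) u j = 0"
    using assms(1) by (simp add: plane_rot_def algebra_simps)
  moreover have "plane_rot j0 j (u j0 / r) (u j / r) u i = u i" if "i \<noteq> j0" "i \<noteq> j" for i
    using that by (simp add: plane_rot_def)
  ultimately show ?thesis
    by (rule that)
qed

text \<open>Rotating in the plane of the coordinates \<open>j0\<close> and \<open>j\<close> moves the \<open>j\<close>-th coordinate of \<open>u\<close>
  onto the axis \<open>j0\<close>; induction on the number of remaining nonzero coordinates.\<close>

lemma emeasure_cone_shell_eq_axis:
  assumes A: "finite A" "j0 \<in> A" and S: "S \<in> sets borel" and u: "norm_on A u > 0"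
  shows "emeasure (lborel_Pi A) (cone_shell A S c u)
       = emeasure (lborel_Pi A) (cone_shell A S c (indicator {j0}))"
proof -
  have "emeasure (lborel_Pi A) (cone_shell A S c u)
      = emeasure (lborel_Pi A) (cone_shell A S c (indicator {j0}))"
    if "card {j \<in> A. j \<noteq> j0 \<and> u j \<noteq> 0} = n" "norm_on A u > 0" for n u
    using that
  proof (induction n arbitrary: u)
    case 0
    then show ?case
      using A by (intro emeasure_cone_shell_axis[OF A S]) auto
  next
    case (Suc n)
    then obtain j where j: "j \<in> A" "j \<noteq> j0" "u j \<noteq> 0"
      by (metis (mono_tags, lifting) card.empty empty_Collect_eq nat.distinct(1))
    obtain c' s where cs: "c'\<^sup>2 + s\<^sup>2 = 1" and rot: "plane_rot j0 j c' s u j = 0"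
      "\<And>i. i \<noteq> j0 \<Longrightarrow> i \<noteq> j \<Longrightarrow> plane_rot j0 j c' s u i = u i"
      using plane_rot_zero_coord[of j j0 u] j by blast
    define u' where "u' = plane_rot j0 j c' s u"
    have "{i \<in> A. i \<noteq> j0 \<and> u' i \<noteq> 0} = {i \<in> A. i \<noteq> j0 \<and> u i \<noteq> 0} - {j}"
      using rot by (force simp: u'_def)
    then have "card {i \<in> A. i \<noteq> j0 \<and> u' i \<noteq> 0} = n"
      using Suc.prems(1) j A(1) by (simp add: card_Diff_singleton)
    moreover have "norm_on A u' > 0"
      using Suc.prems(2) inner_on_plane_rot[OF A(1,2) j(1) j(2)[symmetric] cs]
      by (simp add: norm_on_def u'_def)
    ultimately have "emeasure (lborel_Pi A) (cone_shell A S c u')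
        = emeasure (lborel_Pi A) (cone_shell A S c (indicator {j0}))"
      by (rule Suc.IH)
    then show ?case
      using emeasure_cone_shell_plane_rot[OF A j(1) j(2)[symmetric] cs S] by (simp add: u'_def)
  qed
  then show ?thesis using u by blast
qed

lemma measure_cone_shell_eq:
  assumes "finite A" "A \<noteq> {}" "S \<in> sets borel" "norm_on A u > 0" "norm_on A v > 0"
  shows "measure (lborel_Pi A) (cone_shell A S c u) = measure (lborel_Pi A) (cone_shell A S c v)"
proof -
  obtain j0 where "j0 \<in> A"
    using assms(2) by blast
  then show ?thesis
    using emeasure_cone_shell_eq_axis[OF assms(1) _ assms(3)] assms(4,5) by (simp add: measure_def)
qed

section \<open>Volumes of boxes, balls and cone shells\<close>

lemma sets_PiM_coords_restrict [measurable]: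
  assumes [measurable]: "B0 \<in> sets borel" "B1 \<in> sets borel" "C \<in> sets (lborel_Pi R)"
    and "R \<subseteq> A" "j0 \<in> A" "j1 \<in> A"
  shows "{z \<in> space (lborel_Pi A). z j0 \<in> B0 \<and> z j1 \<in> B1 \<and> restrict z R \<in> C} \<in> sets (lborel_Pi A)"
proof -
  have [measurable]: "(\<lambda>z. restrict z R) \<in> lborel_Pi A \<rightarrow>\<^sub>M lborel_Pi R"
    using assms(4) by (rule measurable_restrict_subset)
  show ?thesis
    using assms(5,6) by measurable
qed

lemma emeasure_PiM_insert_coord_restrict:
  assumes J: "finite J" "a \<notin> J" and B[measurable]: "B \<in> sets borel"
    and C[measurable]: "C \<in> sets (lborel_Pi J)"
  shows "emeasure (lborel_Pi (insert a J)) {z \<in> space (lborel_Pi (insert a J)). z a \<in> B \<and> restrict z J \<in> C}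
       = emeasure lborel B * emeasure (lborel_Pi J) C"
proof -
  interpret product_sigma_finite "\<lambda>_. lborel" by standard
  let ?E = "{z \<in> space (lborel_Pi (insert a J)). z a \<in> B \<and> restrict z J \<in> C}"
  have [measurable]: "(\<lambda>z. restrict z J) \<in> lborel_Pi (insert a J) \<rightarrow>\<^sub>M lborel_Pi J"
    by (rule measurable_restrict_subset) auto
  have E[measurable]: "?E \<in> sets (lborel_Pi (insert a J))"
    by measurable
  have "emeasure (lborel_Pi (insert a J)) ?E
      = (\<integral>\<^sup>+ x. (\<integral>\<^sup>+ y. indicator ?E (x(a := y)) \<partial>lborel) \<partial>lborel_Pi J)"
    using product_nn_integral_insert[OF J, of "indicator ?E"] by simp
  also have "\<dots> = (\<integral>\<^sup>+ x. emeasure lborel B * indicator C x \<partial>lborel_Pi J)"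
  proof (rule nn_integral_cong)
    fix x assume x: "x \<in> space (lborel_Pi J)"
    then have "restrict (x(a := y)) J = x" and "x(a := y) \<in> space (lborel_Pi (insert a J))" for y
      using J by (auto simp: space_PiM PiE_def extensional_def fun_eq_iff)
    then have "indicator ?E (x(a := y)) = (indicator C x * indicator B y :: ennreal)" for y
      by (auto simp: indicator_def)
    then show "(\<integral>\<^sup>+ y. indicator ?E (x(a := y)) \<partial>lborel) = emeasure lborel B * indicator C x"
      by (simp add: nn_integral_cmult mult.commute)
  qed
  also have "\<dots> = emeasure lborel B * emeasure (lborel_Pi J) C"
    by (simp add: nn_integral_cmult)
  finally show ?thesis .
qed

lemma emeasure_PiM_coords_restrict:
  assumes A: "finite A" "j0 \<in> A" "j1 \<in> A" "j0 \<noteq> j1"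
    and B[measurable]: "B0 \<in> sets borel" "B1 \<in> sets borel"
    and C[measurable]: "C \<in> sets (lborel_Pi (A - {j0, j1}))"
  shows "emeasure (lborel_Pi A)
           {z \<in> space (lborel_Pi A). z j0 \<in> B0 \<and> z j1 \<in> B1 \<and> restrict z (A - {j0, j1}) \<in> C}
       = emeasure lborel B0 * (emeasure lborel B1 * emeasure (lborel_Pi (A - {j0, j1})) C)"
proof -
  define R where "R = A - {j0, j1}"
  define J where "J = insert j1 R"
  have AJ: "A = insert j0 J" "j0 \<notin> J" "finite J" "j1 \<notin> R" "finite R"
    using A by (auto simp: J_def R_def)
  define C' where "C' = {x \<in> space (lborel_Pi J). x j1 \<in> B1 \<and> restrict x R \<in> C}"
  have [measurable]: "(\<lambda>z. restrict z R) \<in> lborel_Pi J \<rightarrow>\<^sub>M lborel_Pi R"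
    by (rule measurable_restrict_subset) (auto simp: J_def)
  have C'[measurable]: "C' \<in> sets (lborel_Pi J)"
    unfolding C'_def using C by (measurable; auto simp: J_def R_def)
  have "{z \<in> space (lborel_Pi A). z j0 \<in> B0 \<and> z j1 \<in> B1 \<and> restrict z R \<in> C}
      = {z \<in> space (lborel_Pi (insert j0 J)). z j0 \<in> B0 \<and> restrict z J \<in> C'}"
    using AJ(1,4) by (auto simp: C'_def J_def space_PiM Int_insert_left)
  also have "emeasure (lborel_Pi (insert j0 J)) \<dots> = emeasure lborel B0 * emeasure (lborel_Pi J) C'"
    using AJ by (intro emeasure_PiM_insert_coord_restrict) auto
  also have "emeasure (lborel_Pi J) C' = emeasure lborel B1 * emeasure (lborel_Pi R) C"
    unfolding C'_def J_def using AJ C by (intro emeasure_PiM_insert_coord_restrict) (auto simp: R_def)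
  finally show ?thesis
    by (simp only: R_def AJ(1)[symmetric])
qed

lemma norm_on_eq_sqrt_sum: "norm_on A z = sqrt (\<Sum>i\<in>A. (z i)\<^sup>2)"
  by (simp add: norm_on_def inner_on_def power2_eq_square)

lemma norm_on_nonneg: "0 \<le> norm_on A z"
  by (simp add: norm_on_eq_sqrt_sum sum_nonneg)

definition cball_on :: "nat set \<Rightarrow> real \<Rightarrow> (nat \<Rightarrow> real) set" where
  "cball_on A r = {z \<in> space (lborel_Pi A). norm_on A z \<le> r}"

lemma sets_cball_on [measurable]: "finite A \<Longrightarrow> cball_on A r \<in> sets (lborel_Pi A)"
  unfolding cball_on_def norm_on_eq_sqrt_sum by measurable

lemma emeasure_cball_on:
  "finite A \<Longrightarrow> r > 0 \<Longrightarrow> emeasure (lborel_Pi A) (cball_on A r) = unit_ball_vol (card A) * r ^ card A"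
  using emeasure_cball_aux[of A r] by (simp add: cball_on_def norm_on_eq_sqrt_sum Collect_conj_eq Int_commute)

lemma measure_cball_on:
  "finite A \<Longrightarrow> r > 0 \<Longrightarrow> measure (lborel_Pi A) (cball_on A r) = unit_ball_vol (card A) * r ^ card A"
  by (simp add: measure_def emeasure_cball_on)

lemma measure_ball_on:
  assumes A: "finite A" and r: "r > 0"
  shows "measure (lborel_Pi A) {z \<in> space (lborel_Pi A). norm_on A z < r} = unit_ball_vol (card A) * r ^ card A"
proof -
  let ?B = "{z \<in> space (lborel_Pi A). norm_on A z < r}"
  have sets: "?B \<in> sets (lborel_Pi A)"
    using A unfolding norm_on_eq_sqrt_sum by measurable
  have sub: "?B \<subseteq> cball_on A r"
    by (auto simp: cball_on_def)
  have ball: "cball_on A r \<in> fmeasurable (lborel_Pi A)"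
    using emeasure_cball_on[OF A r] A by (intro fmeasurableI) auto
  have B: "?B \<in> fmeasurable (lborel_Pi A)" "measure (lborel_Pi A) ?B \<le> unit_ball_vol (card A) * r ^ card A"
    using fmeasurableI2[OF ball sub sets] measure_mono_fmeasurable[OF sub sets ball]
    by (simp_all add: measure_cball_on[OF A r])
  have "unit_ball_vol (card A) * r' ^ card A \<le> measure (lborel_Pi A) ?B" if "0 < r'" "r' < r" for r'
  proof -
    have "cball_on A r' \<subseteq> ?B"
      using that by (auto simp: cball_on_def)
    then show ?thesis
      using measure_mono_fmeasurable[of "cball_on A r'" ?B, OF _ sets_cball_on[OF A] B(1)] A that
      by (simp add: measure_cball_on)
  qed
  moreover have "\<forall>\<^sub>F r' in at_left r. 0 < r' \<and> r' < r"
    using eventually_at_left_real[OF r] by (rule eventually_mono) auto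
  ultimately have "\<forall>\<^sub>F r' in at_left r. unit_ball_vol (card A) * r' ^ card A \<le> measure (lborel_Pi A) ?B"
    by (auto elim: eventually_mono)
  moreover have "((\<lambda>r'. unit_ball_vol (card A) * r' ^ card A) \<longlongrightarrow> unit_ball_vol (card A) * r ^ card A) (at_left r)"
    by (intro tendsto_intros)
  ultimately have "unit_ball_vol (card A) * r ^ card A \<le> measure (lborel_Pi A) ?B"
    using tendsto_le[OF trivial_limit_at_left_real tendsto_const] by blast
  with B(2) show ?thesis by linarith
qed

lemma inner_on_indicator:
  assumes "finite A" "j \<in> A"
  shows "inner_on A z (indicator {j}) = z j"
proof -
  have "inner_on A z (indicator {j}) = (\<Sum>i\<in>A. if i = j then z i else 0)"
    unfolding inner_on_def by (rule sum.cong) auto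
  then show ?thesis
    using assms by simp
qed

lemma norm_on_indicator: "finite A \<Longrightarrow> j \<in> A \<Longrightarrow> norm_on A (indicator {j}) = 1"
  by (simp add: norm_on_def inner_on_indicator)

lemma norm_on_split_coords:
  assumes "finite A" "j0 \<in> A" "j1 \<in> A" "j0 \<noteq> j1"
  shows "(norm_on A z)\<^sup>2 = (z j0)\<^sup>2 + (z j1)\<^sup>2 + (norm_on (A - {j0, j1}) (restrict z (A - {j0, j1})))\<^sup>2"
proof -
  have "(\<Sum>i\<in>A. (z i)\<^sup>2) = (z j0)\<^sup>2 + (z j1)\<^sup>2 + (\<Sum>i\<in>A - {j0} - {j1}. (z i)\<^sup>2)"
    using assms by (simp add: sum.remove[of A j0] sum.remove[of "A - {j0}" j1])
  moreover have "(\<Sum>i\<in>A - {j0} - {j1}. (z i)\<^sup>2) = (\<Sum>i\<in>A - {j0, j1}. (restrict z (A - {j0, j1}) i)\<^sup>2)"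
    by (intro sum.cong) auto
  ultimately show ?thesis
    by (simp add: norm_on_eq_sqrt_sum sum_nonneg)
qed

lemma cone_shell_fmeasurable:
  assumes "finite A" "R2 > 0"
  shows "cone_shell A {R1..<R2} c u \<in> fmeasurable (lborel_Pi A)"
proof -
  have "cball_on A R2 \<in> fmeasurable (lborel_Pi A)"
    using emeasure_cball_on[OF assms] assms(1) by (intro fmeasurableI) auto
  moreover have "cone_shell A {R1..<R2} c u \<subseteq> cball_on A R2"
    by (auto simp: cone_shell_def cball_on_def)
  moreover have "cone_shell A {R1..<R2} c u \<in> sets (lborel_Pi A)"
    using assms(1) by (rule sets_cone_shell) simp
  ultimately show ?thesis
    by (rule fmeasurableI2)
qed

text \<open>Near the axis \<open>j0\<close>, the condition \<open>z j0 \<ge> c R1\<close> forces the remaining coordinates to be short.\<close>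

lemma cone_shell_axis_subset_box:
  assumes A: "finite A" "j0 \<in> A" "j1 \<in> A" "j0 \<noteq> j1" and c: "0 \<le> c" and R: "0 \<le> R1" "R1 < R2"
  shows "cone_shell A {R1..<R2} c (indicator {j0}) \<subseteq> {z \<in> space (lborel_Pi A). z j0 \<in> {0..R2}
    \<and> z j1 \<in> {-R2..R2} \<and> restrict z (A - {j0, j1}) \<in> cball_on (A - {j0, j1}) (sqrt (R2\<^sup>2 - c\<^sup>2 * R1\<^sup>2))}"
proof
  fix z assume z: "z \<in> cone_shell A {R1..<R2} c (indicator {j0})"
  let ?w = "norm_on (A - {j0, j1}) (restrict z (A - {j0, j1}))"
  have sp: "z \<in> space (lborel_Pi A)" and n1: "R1 \<le> norm_on A z" and n2: "norm_on A z < R2"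
    and z0: "norm_on A z * c \<le> z j0"
    using z A by (auto simp: cone_shell_def inner_on_indicator norm_on_indicator)
  have split: "(norm_on A z)\<^sup>2 = (z j0)\<^sup>2 + (z j1)\<^sup>2 + ?w\<^sup>2"
    by (rule norm_on_split_coords[OF A])
  have n2': "(norm_on A z)\<^sup>2 < R2\<^sup>2"
    using n1 n2 R by (intro power_strict_mono) auto
  have "R1 * c \<le> z j0" using z0 n1 c by (meson mult_right_mono order_trans)
  moreover have "0 \<le> R1 * c" using R c by simp
  ultimately have a0: "0 \<le> z j0" and "(R1 * c)\<^sup>2 \<le> (z j0)\<^sup>2"
    by (auto intro: power_mono)
  then have c0: "c\<^sup>2 * R1\<^sup>2 \<le> (z j0)\<^sup>2" by (simp add: power_mult_distrib mult.commute)
  have "(z j0)\<^sup>2 < R2\<^sup>2" and "(z j1)\<^sup>2 < R2\<^sup>2"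
    using split n2' zero_le_power2[of ?w] zero_le_power2[of "z j0"] zero_le_power2[of "z j1"] by linarith+
  then have "z j0 \<le> R2" and "\<bar>z j1\<bar> \<le> R2"
    using R a0 power2_less_imp_less[of "z j0" R2] power2_less_imp_less[of "\<bar>z j1\<bar>" R2] by auto
  moreover have "?w\<^sup>2 \<le> R2\<^sup>2 - c\<^sup>2 * R1\<^sup>2"
    using split n2' c0 zero_le_power2[of "z j1"] by linarith
  then have "?w \<le> sqrt (R2\<^sup>2 - c\<^sup>2 * R1\<^sup>2)"
    by (rule real_le_rsqrt)
  ultimately show "z \<in> {z \<in> space (lborel_Pi A). z j0 \<in> {0..R2} \<and> z j1 \<in> {-R2..R2}
    \<and> restrict z (A - {j0, j1}) \<in> cball_on (A - {j0, j1}) (sqrt (R2\<^sup>2 - c\<^sup>2 * R1\<^sup>2))}"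
    using sp a0 by (auto simp: cball_on_def space_PiM PiE_def abs_le_iff)
qed

lemma box_subset_cone_shell_axis:
  assumes A: "finite A" "j0 \<in> A" "j1 \<in> A" "j0 \<noteq> j1"
    and c: "0 \<le> c" and h: "0 \<le> h" and \<alpha>: "0 \<le> \<alpha>" "c * R2 \<le> \<alpha>" and b1: "0 \<le> b1"
    and R1: "R1\<^sup>2 \<le> \<alpha>\<^sup>2 + b1\<^sup>2" and R2: "(\<alpha> + h)\<^sup>2 + h\<^sup>2 + b2\<^sup>2 < R2\<^sup>2" "0 < R2"
  shows "{z \<in> space (lborel_Pi A). z j0 \<in> {\<alpha>..\<alpha> + h} \<and> z j1 \<in> {0..h}
    \<and> restrict z (A - {j0, j1}) \<in> cball_on (A - {j0, j1}) b2 - cball_on (A - {j0, j1}) b1}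
    \<subseteq> cone_shell A {R1..<R2} c (indicator {j0})"
proof
  fix z assume z: "z \<in> {z \<in> space (lborel_Pi A). z j0 \<in> {\<alpha>..\<alpha> + h} \<and> z j1 \<in> {0..h}
    \<and> restrict z (A - {j0, j1}) \<in> cball_on (A - {j0, j1}) b2 - cball_on (A - {j0, j1}) b1}"
  let ?w = "norm_on (A - {j0, j1}) (restrict z (A - {j0, j1}))"
  have sp: "z \<in> space (lborel_Pi A)" and z0: "\<alpha> \<le> z j0" "z j0 \<le> \<alpha> + h"
    and z1: "0 \<le> z j1" "z j1 \<le> h" and w: "?w \<le> b2" "b1 < ?w"
    using z by (auto simp: cball_on_def)
  have split: "(norm_on A z)\<^sup>2 = (z j0)\<^sup>2 + (z j1)\<^sup>2 + ?w\<^sup>2"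
    by (rule norm_on_split_coords[OF A])
  have "b1\<^sup>2 < ?w\<^sup>2" and "?w\<^sup>2 \<le> b2\<^sup>2"
    using w b1 norm_on_nonneg by (auto intro: power_strict_mono power_mono)
  moreover have "\<alpha>\<^sup>2 \<le> (z j0)\<^sup>2" "(z j0)\<^sup>2 \<le> (\<alpha> + h)\<^sup>2" "(z j1)\<^sup>2 \<le> h\<^sup>2"
    using z0 z1 \<alpha> by (auto intro: power_mono)
  ultimately have "R1\<^sup>2 \<le> (norm_on A z)\<^sup>2" "(norm_on A z)\<^sup>2 < R2\<^sup>2"
    using split R1 R2(1) zero_le_power2[of "z j1"] by linarith+
  then have n1: "R1 \<le> norm_on A z" and n2: "norm_on A z < R2"
    using R2(2) norm_on_nonneg[of A z] by (auto intro: power2_le_imp_le power2_less_imp_less)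
  have "norm_on A z * c \<le> R2 * c"
    using n2 c by (intro mult_right_mono) auto
  then have "norm_on A z * c \<le> z j0"
    using \<alpha>(2) z0 by (simp add: mult.commute)
  then show "z \<in> cone_shell A {R1..<R2} c (indicator {j0})"
    using sp n1 n2 A by (simp add: cone_shell_def inner_on_indicator norm_on_indicator)
qed

lemma measure_cone_shell_axis_le:
  assumes A: "finite A" "j0 \<in> A" "j1 \<in> A" "j0 \<noteq> j1"
    and c: "0 \<le> c" and R: "0 \<le> R1" "R1 < R2" and X: "0 < R2\<^sup>2 - c\<^sup>2 * R1\<^sup>2"
  shows "measure (lborel_Pi A) (cone_shell A {R1..<R2} c (indicator {j0}))
      \<le> R2 * (2 * R2 * (unit_ball_vol (card A - 2) * sqrt (R2\<^sup>2 - c\<^sup>2 * R1\<^sup>2) ^ (card A - 2)))"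
proof -
  define Rs where "Rs = A - {j0, j1}"
  have Rs: "card Rs = card A - 2" "finite Rs"
    using A by (auto simp: Rs_def card_Diff_subset)
  define X where "X = sqrt (R2\<^sup>2 - c\<^sup>2 * R1\<^sup>2)"
  have "X > 0" using X by (simp add: X_def)
  define U where
    "U = {z \<in> space (lborel_Pi A). z j0 \<in> {0..R2} \<and> z j1 \<in> {-R2..R2} \<and> restrict z Rs \<in> cball_on Rs X}"
  have U: "emeasure (lborel_Pi A) U
      = ennreal R2 * (ennreal (2 * R2) * ennreal (unit_ball_vol (card A - 2) * X ^ (card A - 2)))"
    unfolding U_def Rs_def using emeasure_cball_on[OF Rs(2) \<open>X > 0\<close>] R Rs
    by (subst emeasure_PiM_coords_restrict[OF A]) (auto simp: Rs_def)
  have "U \<in> sets (lborel_Pi A)"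
    unfolding U_def using A Rs by (intro sets_PiM_coords_restrict) (auto simp: Rs_def)
  with U have "U \<in> fmeasurable (lborel_Pi A)"
    by (intro fmeasurableI) (auto simp: ennreal_mult_less_top)
  moreover have "cone_shell A {R1..<R2} c (indicator {j0}) \<subseteq> U"
    unfolding U_def Rs_def X_def by (rule cone_shell_axis_subset_box[OF A c R])
  ultimately have "measure (lborel_Pi A) (cone_shell A {R1..<R2} c (indicator {j0})) \<le> measure (lborel_Pi A) U"
    using A by (intro measure_mono_fmeasurable) auto
  also have "\<dots> = R2 * (2 * R2 * (unit_ball_vol (card A - 2) * X ^ (card A - 2)))"
    using U R \<open>X > 0\<close> unfolding measure_def
    by (simp add: ennreal_mult'[symmetric] ennreal_mult[symmetric])
  finally show ?thesis by (simp add: X_def)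
qed

lemma measure_cone_shell_axis_ge:
  assumes A: "finite A" "j0 \<in> A" "j1 \<in> A" "j0 \<noteq> j1"
    and c: "0 \<le> c" and h: "0 < h" and \<alpha>: "0 \<le> \<alpha>" "c * R2 \<le> \<alpha>" and b: "0 < b1" "b1 < b2"
    and R1: "R1\<^sup>2 \<le> \<alpha>\<^sup>2 + b1\<^sup>2" and R2: "(\<alpha> + h)\<^sup>2 + h\<^sup>2 + b2\<^sup>2 < R2\<^sup>2" "0 < R2"
  shows "h * (h * (unit_ball_vol (card A - 2) * (b2 ^ (card A - 2) - b1 ^ (card A - 2))))
      \<le> measure (lborel_Pi A) (cone_shell A {R1..<R2} c (indicator {j0}))"
proof -
  define Rs where "Rs = A - {j0, j1}"
  have Rs: "card Rs = card A - 2" "finite Rs"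
    using A by (auto simp: Rs_def card_Diff_subset)
  let ?v = "unit_ball_vol (card A - 2)"
  have shell[measurable]: "cball_on Rs b2 - cball_on Rs b1 \<in> sets (lborel_Pi Rs)"
    using Rs by auto
  have "cball_on Rs b1 \<subseteq> cball_on Rs b2"
    using b by (auto simp: cball_on_def)
  then have "emeasure (lborel_Pi Rs) (cball_on Rs b2 - cball_on Rs b1)
      = ennreal (?v * b2 ^ (card A - 2) - ?v * b1 ^ (card A - 2))"
    using emeasure_cball_on[OF Rs(2), of b1] emeasure_cball_on[OF Rs(2), of b2] b Rs
    by (subst emeasure_Diff) (auto simp: ennreal_minus)
  then have shell_measure: "emeasure (lborel_Pi Rs) (cball_on Rs b2 - cball_on Rs b1)
      = ennreal (?v * (b2 ^ (card A - 2) - b1 ^ (card A - 2)))"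
    by (simp add: algebra_simps)
  have pow: "b1 ^ (card A - 2) \<le> b2 ^ (card A - 2)"
    using b by (intro power_mono) auto
  define L where "L = {z \<in> space (lborel_Pi A). z j0 \<in> {\<alpha>..\<alpha> + h} \<and> z j1 \<in> {0..h}
    \<and> restrict z Rs \<in> cball_on Rs b2 - cball_on Rs b1}"
  have L: "emeasure (lborel_Pi A) L = ennreal h * (ennreal h * ennreal (?v * (b2 ^ (card A - 2) - b1 ^ (card A - 2))))"
    unfolding L_def Rs_def using shell_measure shell h
    by (subst emeasure_PiM_coords_restrict[OF A]) (auto simp: Rs_def)
  have "L \<in> sets (lborel_Pi A)"
    unfolding L_def using A by (intro sets_PiM_coords_restrict) (auto simp: Rs_def)
  with L have "L \<in> fmeasurable (lborel_Pi A)"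
    by (intro fmeasurableI) (auto simp: ennreal_mult_less_top)
  moreover have "L \<subseteq> cone_shell A {R1..<R2} c (indicator {j0})"
    unfolding L_def Rs_def using b h by (intro box_subset_cone_shell_axis[OF A c _ \<alpha> _ R1 R2]) auto
  ultimately have "measure (lborel_Pi A) L \<le> measure (lborel_Pi A) (cone_shell A {R1..<R2} c (indicator {j0}))"
    using cone_shell_fmeasurable[OF A(1) R2(2)] by (intro measure_mono_fmeasurable) auto
  moreover have "measure (lborel_Pi A) L = h * (h * (?v * (b2 ^ (card A - 2) - b1 ^ (card A - 2))))"
    using L h pow unfolding measure_def
    by (simp add: ennreal_mult'[symmetric] ennreal_mult[symmetric])
  ultimately show ?thesis by simp
qed

section \<open>Exponential growth rates\<close>

lemma tendsto_div_real_zero: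
  "(f \<longlongrightarrow> l) sequentially \<Longrightarrow> ((\<lambda>n. f n / real n) \<longlongrightarrow> 0) sequentially"
  by (rule tendsto_divide_0[OF _ filterlim_at_top_imp_at_infinity[OF filterlim_real_sequentially]])

lemma tendsto_real_diff_div_real: "((\<lambda>n. real (n - k) / real n) \<longlongrightarrow> 1) sequentially"
proof -
  have "\<forall>\<^sub>F n in sequentially. 1 - real k / real n = real (n - k) / real n"
    using eventually_ge_at_top[of "k + 1"] by eventually_elim (simp add: of_nat_diff field_simps)
  moreover have "((\<lambda>n. 1 - real k / real n) \<longlongrightarrow> 1 - 0) sequentially"
    by (intro tendsto_intros tendsto_div_real_zero)
  ultimately show ?thesis
    using tendsto_cong by force
qed

lemma tendsto_ln_div_real_zero:
  assumes "((\<lambda>n. g n * real n powr p) \<longlongrightarrow> a) sequentially" "a > 0"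
  shows "((\<lambda>n. ln (g n) / real n) \<longlongrightarrow> 0) sequentially"
proof -
  have "\<forall>\<^sub>F n in sequentially. ln (g n * real n powr p) / real n - p * (ln (real n) / real n) = ln (g n) / real n"
    using order_tendstoD(1)[OF assms] eventually_gt_at_top[of 0]
  proof eventually_elim
    case (elim n)
    then have "g n > 0" by (simp add: zero_less_mult_iff)
    with elim show ?case by (simp add: ln_mult add_divide_distrib diff_divide_distrib)
  qed
  moreover have "((\<lambda>n. ln (g n * real n powr p) / real n - p * (ln (real n) / real n)) \<longlongrightarrow> 0 - p * 0) sequentially"
    by (intro tendsto_intros tendsto_div_real_zero[OF tendsto_ln[OF assms(1)]]) (use assms in auto)
  ultimately show ?thesis
    using tendsto_cong by force
qed

lemma tendsto_ln_mult_power_div_real: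
  assumes P: "((\<lambda>n. P n * real n powr p) \<longlongrightarrow> a) sequentially" "a > 0"
    and x: "(x \<longlongrightarrow> x0) sequentially" "x0 > 0"
  shows "((\<lambda>n. ln (P n * x n ^ (n - k)) / real n) \<longlongrightarrow> ln x0) sequentially"
proof -
  have "\<forall>\<^sub>F n in sequentially. ln (P n) / real n + real (n - k) / real n * ln (x n)
      = ln (P n * x n ^ (n - k)) / real n"
    using order_tendstoD(1)[OF P] order_tendstoD(1)[OF x] eventually_gt_at_top[of 0]
  proof eventually_elim
    case (elim n)
    then have "P n > 0" by (simp add: zero_less_mult_iff)
    with elim show ?case by (simp add: ln_mult ln_realpow add_divide_distrib)
  qed
  moreover have "((\<lambda>n. ln (P n) / real n + real (n - k) / real n * ln (x n)) \<longlongrightarrow> 0 + 1 * ln x0) sequentially"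
    by (intro tendsto_intros tendsto_ln_div_real_zero[OF P] tendsto_real_diff_div_real x) (use x in auto)
  ultimately show ?thesis
    using tendsto_cong by force
qed

lemma tendsto_ln_div_real_sandwich:
  assumes "\<forall>\<^sub>F n in sequentially. 0 < l n \<and> l n \<le> f n \<and> f n \<le> u n"
    and "((\<lambda>n. ln (l n) / real n) \<longlongrightarrow> L) sequentially"
    and "((\<lambda>n. ln (u n) / real n) \<longlongrightarrow> L) sequentially"
  shows "((\<lambda>n. ln (f n) / real n) \<longlongrightarrow> L) sequentially"
proof (rule tendsto_sandwich[OF _ _ assms(2,3)])
  show "\<forall>\<^sub>F n in sequentially. ln (l n) / real n \<le> ln (f n) / real n"
    and "\<forall>\<^sub>F n in sequentially. ln (f n) / real n \<le> ln (u n) / real n"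
    using assms(1) by (eventually_elim, auto intro!: divide_right_mono)+
qed

lemma unit_ball_vol_Suc_Suc:
  "unit_ball_vol (real (k + 2)) = unit_ball_vol (real k) * (2 * pi) / real (k + 2)"
proof -
  define G where "G = Gamma (real k / 2 + 1)"
  define P where "P = pi powr (real k / 2)"
  have "\<not> real k / 2 + 1 \<le> 0"
    by simp
  then have "real k / 2 + 1 \<notin> \<int>\<^sub>\<le>\<^sub>0"
    using nonpos_Ints_nonpos by blast
  then have "Gamma (real (k + 2) / 2 + 1) = (real k / 2 + 1) * G"
    using Gamma_plus1[of "real k / 2 + 1"] by (simp add: G_def add_divide_distrib add_ac)
  moreover have "pi powr (real (k + 2) / 2) = pi * P"
    by (simp add: P_def add_divide_distrib powr_add)
  ultimately have "unit_ball_vol (real (k + 2)) = pi * P / ((real k / 2 + 1) * G)"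
    by (simp add: unit_ball_vol_def)
  moreover have "unit_ball_vol (real k) = P / G"
    by (simp add: unit_ball_vol_def P_def G_def)
  moreover have "G > 0"
    unfolding G_def by (intro Gamma_real_pos) simp
  ultimately have "unit_ball_vol (real (k + 2)) = pi * unit_ball_vol (real k) / (real k / 2 + 1)"
    by simp
  then show ?thesis
    by (simp add: field_simps)
qed

lemma unit_ball_vol_diff_2:
  assumes "2 \<le> m"
  shows "unit_ball_vol (real (m - 2)) = unit_ball_vol (real m) * real m / (2 * pi)"
  using unit_ball_vol_Suc_Suc[of "m - 2"] assms by (simp add: field_simps)

lemma tendsto_ln_unit_ball_vol_ratio:
  assumes K: "K > 0" and P: "(\<lambda>n. P n * real n powr p) \<longlonglongrightarrow> a" "a > 0"
    and x: "x \<longlonglongrightarrow> x0" "x0 > 0"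
  shows "(\<lambda>n. ln (P n * unit_ball_vol (n - 4) * x n ^ (n - k) / (K * unit_ball_vol (n - 2))) / real n)
    \<longlonglongrightarrow> ln x0"
proof -
  define Q where "Q n = P n * real (n - 2) / (2 * pi * K)" for n
  have eq: "\<forall>\<^sub>F n in sequentially. ln (Q n * x n ^ (n - k)) / real n
      = ln (P n * unit_ball_vol (n - 4) * x n ^ (n - k) / (K * unit_ball_vol (n - 2))) / real n"
    using eventually_ge_at_top[of 4]
  proof eventually_elim
    case (elim n)
    then have v: "unit_ball_vol (real (n - 4)) = unit_ball_vol (real (n - 2)) * real (n - 2) / (2 * pi)"
      using unit_ball_vol_diff_2[of "n - 2"] by (simp add: numeral_eq_Suc)
    have "unit_ball_vol (real (n - 2)) \<noteq> 0"
      using unit_ball_vol_pos[of "real (n - 2)"] by linarith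
    then have "Q n * x n ^ (n - k) = P n * unit_ball_vol (n - 4) * x n ^ (n - k) / (K * unit_ball_vol (n - 2))"
      unfolding v Q_def using K by (simp add: divide_simps mult_ac)
    then show ?case
      by simp
  qed
  have "(\<lambda>n. Q n * real n powr (p - 1)) \<longlonglongrightarrow> a * 1 / (2 * pi * K)"
  proof -
    have "\<forall>\<^sub>F n in sequentially. P n * real n powr p * (real (n - 2) / real n) / (2 * pi * K)
        = Q n * real n powr (p - 1)"
      using eventually_gt_at_top[of 0] by eventually_elim (simp add: Q_def powr_diff field_simps)
    moreover have "(\<lambda>n. P n * real n powr p * (real (n - 2) / real n) / (2 * pi * K)) \<longlonglongrightarrow> a * 1 / (2 * pi * K)"
      by (intro tendsto_intros P tendsto_real_diff_div_real) (use K in simp)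
    ultimately show ?thesis
      using tendsto_cong by force
  qed
  from tendsto_ln_mult_power_div_real[OF this _ x]
  have "(\<lambda>n. ln (Q n * x n ^ (n - k)) / real n) \<longlonglongrightarrow> ln x0"
    using K P(2) by simp
  with tendsto_cong[OF eq] show ?thesis
    by simp
qed

lemma diff_mult_power_le_power_diff:
  fixes x y :: real
  assumes "0 \<le> y" "y \<le> x"
  shows "(x - y) * x ^ k \<le> x ^ Suc k - y ^ Suc k"
proof -
  have "y * y ^ k \<le> y * x ^ k"
    using assms by (intro mult_left_mono power_mono) auto
  then show ?thesis
    by (simp add: algebra_simps)
qed

text \<open>The shell of the paper, with radii \<open>D - 3/n \<le> \<bar>z\<bar> < D - 2/n\<close> and cone cosine \<open>c + 1/\<surd>n\<close>, in
  dimension \<open>n - 2\<close>. The remaining sequences parametrise the boxes of the two volume bounds.\<close>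

locale cone_shell_asymptotics =
  fixes D c :: real
  assumes D_pos: "0 < D" and c_pos: "0 < c" and c_less_1: "c < 1"
begin

definition cos_seq :: "nat \<Rightarrow> real" where "cos_seq n = c + 1 / sqrt (real n)"
definition inner_radius :: "nat \<Rightarrow> real" where "inner_radius n = D - 3 / real n"
definition outer_radius :: "nat \<Rightarrow> real" where "outer_radius n = D - 2 / real n"
definition side :: "nat \<Rightarrow> real" where "side n = 1 / (real n)\<^sup>2"
definition offset :: "nat \<Rightarrow> real" where "offset n = cos_seq n * outer_radius n"
definition b_in :: "nat \<Rightarrow> real" where "b_in n = sqrt ((inner_radius n)\<^sup>2 - (offset n)\<^sup>2)"
definition b_out :: "nat \<Rightarrow> real" where
  "b_out n = sqrt ((outer_radius n)\<^sup>2 - (offset n + side n)\<^sup>2 - (side n)\<^sup>2 - side n)"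
definition x_out :: "nat \<Rightarrow> real" where
  "x_out n = sqrt ((outer_radius n)\<^sup>2 - (cos_seq n)\<^sup>2 * (inner_radius n)\<^sup>2)"
definition \<beta> :: real where "\<beta> = D * sqrt (1 - c\<^sup>2)"

lemma \<beta>_pos: "\<beta> > 0"
  using D_pos c_pos c_less_1 by (simp add: \<beta>_def power2_less_1_iff abs_less_iff)

lemma \<beta>_eq: "sqrt (D\<^sup>2 - (c * D)\<^sup>2) = \<beta>"
proof -
  have "D\<^sup>2 - (c * D)\<^sup>2 = D\<^sup>2 * (1 - c\<^sup>2)"
    by (simp add: algebra_simps power2_eq_square)
  then show ?thesis
    using D_pos by (simp add: \<beta>_def real_sqrt_mult)
qed

lemma tendsto_cos_seq: "cos_seq \<longlonglongrightarrow> c"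
proof -
  have "((\<lambda>n. c + sqrt (1 / real n)) \<longlongrightarrow> c + sqrt 0) sequentially"
    by (intro tendsto_intros lim_inverse_n')
  then show ?thesis
    by (simp add: cos_seq_def[abs_def] real_sqrt_divide)
qed

lemma tendsto_inner_radius: "inner_radius \<longlonglongrightarrow> D"
  using tendsto_diff[OF tendsto_const tendsto_div_real_zero[OF tendsto_const[of 3]], of D]
  by (simp add: inner_radius_def[abs_def])

lemma tendsto_outer_radius: "outer_radius \<longlonglongrightarrow> D"
  using tendsto_diff[OF tendsto_const tendsto_div_real_zero[OF tendsto_const[of 2]], of D]
  by (simp add: outer_radius_def[abs_def])

lemma tendsto_real_mult_side: "(\<lambda>n. real n * side n) \<longlonglongrightarrow> 0"
proof -
  have "\<forall>\<^sub>F n in sequentially. 1 / real n = real n * side n"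
    using eventually_gt_at_top[of 0] by eventually_elim (simp add: side_def power2_eq_square)
  then show ?thesis
    using tendsto_cong lim_inverse_n' by fastforce
qed

lemma tendsto_side: "side \<longlonglongrightarrow> 0"
  using tendsto_power[OF lim_inverse_n', of 2] by (simp add: side_def[abs_def] power_divide)

lemma tendsto_offset: "offset \<longlonglongrightarrow> c * D"
  unfolding offset_def[abs_def] by (intro tendsto_mult tendsto_cos_seq tendsto_outer_radius)

lemma tendsto_x_out: "x_out \<longlonglongrightarrow> \<beta>"
  unfolding x_out_def[abs_def] \<beta>_eq[symmetric] power_mult_distrib
  by (intro tendsto_intros tendsto_outer_radius tendsto_cos_seq tendsto_inner_radius)

lemma tendsto_b_in: "b_in \<longlonglongrightarrow> \<beta>"
  unfolding b_in_def[abs_def] \<beta>_eq[symmetric]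
  by (intro tendsto_intros tendsto_inner_radius tendsto_offset)

lemma tendsto_b_out: "b_out \<longlonglongrightarrow> \<beta>"
proof -
  have "((\<lambda>n. (outer_radius n)\<^sup>2 - (offset n + side n)\<^sup>2 - (side n)\<^sup>2 - side n)
      \<longlongrightarrow> D\<^sup>2 - (c * D + 0)\<^sup>2 - 0\<^sup>2 - 0) sequentially"
    by (intro tendsto_intros tendsto_outer_radius tendsto_offset tendsto_side)
  then show ?thesis
    unfolding b_out_def[abs_def] \<beta>_eq[symmetric] by (intro tendsto_real_sqrt) simp
qed

lemma eventually_radicands_pos:
  "\<forall>\<^sub>F n in sequentially. 0 < (inner_radius n)\<^sup>2 - (offset n)\<^sup>2
     \<and> 0 < (outer_radius n)\<^sup>2 - (offset n + side n)\<^sup>2 - (side n)\<^sup>2 - side n"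
proof -
  have pos: "0 < D\<^sup>2 - (c * D)\<^sup>2"
    using \<beta>_eq \<beta>_pos by (metis real_sqrt_le_0_iff not_le)
  have l1: "((\<lambda>n. (inner_radius n)\<^sup>2 - (offset n)\<^sup>2) \<longlongrightarrow> D\<^sup>2 - (c * D)\<^sup>2) sequentially"
    by (intro tendsto_intros tendsto_inner_radius tendsto_offset)
  have "((\<lambda>n. (outer_radius n)\<^sup>2 - (offset n + side n)\<^sup>2 - (side n)\<^sup>2 - side n)
      \<longlongrightarrow> D\<^sup>2 - (c * D + 0)\<^sup>2 - 0\<^sup>2 - 0) sequentially"
    by (intro tendsto_intros tendsto_outer_radius tendsto_offset tendsto_side)
  then have l2: "((\<lambda>n. (outer_radius n)\<^sup>2 - (offset n + side n)\<^sup>2 - (side n)\<^sup>2 - side n)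
      \<longlongrightarrow> D\<^sup>2 - (c * D)\<^sup>2) sequentially"
    by simp
  show ?thesis
    using order_tendstoD(1)[OF l1 pos] order_tendstoD(1)[OF l2 pos] by (rule eventually_conj)
qed

text \<open>The gap between the two radii of the lower bound shrinks like \<open>1/n\<close>, so it costs nothing in
  the exponential growth rate.\<close>

lemma tendsto_real_mult_b_gap: "(\<lambda>n. real n * (b_out n - b_in n)) \<longlonglongrightarrow> D / \<beta>"
proof -
  have "\<forall>\<^sub>F n in sequentially. real n * ((b_out n)\<^sup>2 - (b_in n)\<^sup>2)
      = 2 * D - 5 / real n - (2 * offset n * (real n * side n) + 2 * side n * (real n * side n) + real n * side n)"
    using eventually_radicands_pos eventually_gt_at_top[of 0]
  proof eventually_elim
    case (elim n)
    then have "real n * ((b_out n)\<^sup>2 - (b_in n)\<^sup>2) = real n * ((outer_radius n)\<^sup>2 - (inner_radius n)\<^sup>2)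
        - real n * (2 * offset n * side n + 2 * (side n)\<^sup>2 + side n)"
      by (simp add: b_in_def b_out_def algebra_simps power2_eq_square)
    moreover have "real n * ((outer_radius n)\<^sup>2 - (inner_radius n)\<^sup>2) = 2 * D - 5 / real n"
      using elim by (simp add: inner_radius_def outer_radius_def field_simps power2_eq_square)
    ultimately show ?case
      by (simp add: algebra_simps power2_eq_square)
  qed
  moreover have "((\<lambda>n. 2 * D - 5 / real n - (2 * offset n * (real n * side n) + 2 * side n * (real n * side n)
      + real n * side n)) \<longlongrightarrow> 2 * D - 0 - (2 * (c * D) * 0 + 2 * 0 * 0 + 0)) sequentially"
    by (intro tendsto_intros tendsto_div_real_zero tendsto_offset tendsto_real_mult_side tendsto_side)
  ultimately have "(\<lambda>n. real n * ((b_out n)\<^sup>2 - (b_in n)\<^sup>2)) \<longlonglongrightarrow> 2 * D"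
    using tendsto_cong by force
  then have "(\<lambda>n. real n * ((b_out n)\<^sup>2 - (b_in n)\<^sup>2) / (b_out n + b_in n)) \<longlonglongrightarrow> 2 * D / (\<beta> + \<beta>)"
    using \<beta>_pos by (intro tendsto_divide tendsto_add tendsto_b_out tendsto_b_in) auto
  moreover have "\<forall>\<^sub>F n in sequentially. real n * ((b_out n)\<^sup>2 - (b_in n)\<^sup>2) / (b_out n + b_in n)
      = real n * (b_out n - b_in n)"
    using order_tendstoD(1)[OF tendsto_add[OF tendsto_b_out tendsto_b_in], of 0] \<beta>_pos
    by (auto elim!: eventually_mono simp: power2_eq_square field_simps)
  ultimately show ?thesis
    using \<beta>_pos tendsto_cong by force
qed

text \<open>Volumes of the box-times-shell and box-times-ball sets for the axis bounds, with
  \<open>b_out\<^sup>m - b_in\<^sup>m\<close> weakened to \<open>(b_out - b_in) b_out\<^sup>m\<^sup>-\<^sup>1\<close>.\<close>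

definition lower_bound :: "nat \<Rightarrow> real" where
  "lower_bound n = (side n)\<^sup>2 * (b_out n - b_in n) * unit_ball_vol (n - 4) * b_out n ^ (n - 5)"
definition upper_bound :: "nat \<Rightarrow> real" where
  "upper_bound n = 2 * (outer_radius n)\<^sup>2 * unit_ball_vol (n - 4) * x_out n ^ (n - 4)"

lemma eventually_shell_parameters:
  "\<forall>\<^sub>F n in sequentially. 5 \<le> n \<and> 0 < inner_radius n \<and> 0 < x_out n \<and> 0 < b_in n \<and> b_in n < b_out n
     \<and> 0 < (inner_radius n)\<^sup>2 - (offset n)\<^sup>2
     \<and> 0 < (outer_radius n)\<^sup>2 - (offset n + side n)\<^sup>2 - (side n)\<^sup>2 - side n"
proof -
  have "\<forall>\<^sub>F n in sequentially. 0 < real n * (b_out n - b_in n)"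
    using order_tendstoD(1)[OF tendsto_real_mult_b_gap, of 0] D_pos \<beta>_pos by simp
  then have "\<forall>\<^sub>F n in sequentially. b_in n < b_out n"
    by (rule eventually_mono) (simp add: zero_less_mult_iff)
  moreover have "\<forall>\<^sub>F n in sequentially. 0 < inner_radius n"
    using order_tendstoD(1)[OF tendsto_inner_radius] D_pos by simp
  moreover have "\<forall>\<^sub>F n in sequentially. 0 < x_out n"
    using order_tendstoD(1)[OF tendsto_x_out] \<beta>_pos by simp
  moreover have "\<forall>\<^sub>F n in sequentially. 0 < b_in n"
    using order_tendstoD(1)[OF tendsto_b_in] \<beta>_pos by simp
  ultimately show ?thesis
    using eventually_radicands_pos eventually_ge_at_top[of 5] by eventually_elim auto
qed

lemma eventually_measure_cone_shell_bounds:
  "\<forall>\<^sub>F n in sequentially. 0 < lower_bound n \<and> (\<forall>A u. finite A \<longrightarrow> card A = n - 2 \<longrightarrow> norm_on A u > 0 \<longrightarrow>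
     lower_bound n \<le> measure (lborel_Pi A) (cone_shell A {inner_radius n..<outer_radius n} (cos_seq n) u)
     \<and> measure (lborel_Pi A) (cone_shell A {inner_radius n..<outer_radius n} (cos_seq n) u) \<le> upper_bound n)"
  using eventually_shell_parameters
proof eventually_elim
  case (elim n)
  let ?c = "cos_seq n" and ?R1 = "inner_radius n" and ?R2 = "outer_radius n" and ?h = "side n"
  have n: "real n > 0" "n - 4 = Suc (n - 5)"
    using elim by auto
  have c: "0 \<le> ?c"
    using c_pos by (simp add: cos_seq_def)
  have radii: "?R1 < ?R2"
    using n by (simp add: inner_radius_def outer_radius_def divide_strict_right_mono)
  have h: "0 < ?h"
    using n by (simp add: side_def)
  have b_in: "(b_in n)\<^sup>2 = ?R1\<^sup>2 - (offset n)\<^sup>2"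
    using elim by (simp add: b_in_def)
  have b_out: "(b_out n)\<^sup>2 = ?R2\<^sup>2 - (offset n + ?h)\<^sup>2 - ?h\<^sup>2 - ?h"
    using elim by (simp add: b_out_def)
  have x_out: "0 < ?R2\<^sup>2 - ?c\<^sup>2 * ?R1\<^sup>2"
    using elim by (simp add: x_out_def)
  have "0 < lower_bound n"
    using elim h by (simp add: lower_bound_def)
  moreover have "lower_bound n \<le> measure (lborel_Pi A) (cone_shell A {?R1..<?R2} ?c u)
      \<and> measure (lborel_Pi A) (cone_shell A {?R1..<?R2} ?c u) \<le> upper_bound n"
    if A: "finite A" "card A = n - 2" and u: "norm_on A u > 0" for A u
  proof -
    have "2 \<le> card A"
      using A(2) elim by linarith
    then obtain T where "T \<subseteq> A" "card T = 2"
      by (rule obtain_subset_with_card_n)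
    then obtain j0 j1 where j: "j0 \<in> A" "j1 \<in> A" "j0 \<noteq> j1"
      by (auto simp: card_2_iff)
    have dim: "card A - 2 = n - 4"
      using A(2) by simp
    let ?shell = "\<lambda>u. cone_shell A {?R1..<?R2} ?c u"
    have "measure (lborel_Pi A) (?shell u) = measure (lborel_Pi A) (?shell (indicator {j0}))"
      using emeasure_cone_shell_eq_axis[OF A(1) j(1) _ u] by (simp add: measure_def)
    moreover have "lower_bound n
        \<le> ?h * (?h * (unit_ball_vol (n - 4) * (b_out n ^ (n - 4) - b_in n ^ (n - 4))))"
      using diff_mult_power_le_power_diff[of "b_in n" "b_out n" "n - 5"] elim h
      by (simp add: lower_bound_def n(2) power2_eq_square mult_left_mono mult_ac)
    moreover have "?h * (?h * (unit_ball_vol (n - 4) * (b_out n ^ (n - 4) - b_in n ^ (n - 4))))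
        \<le> measure (lborel_Pi A) (?shell (indicator {j0}))"
      using measure_cone_shell_axis_ge[OF A(1) j c h, of "offset n" ?R2 "b_in n" "b_out n" ?R1]
        elim c h radii b_in b_out
      unfolding dim by (simp add: offset_def)
    moreover have "measure (lborel_Pi A) (?shell (indicator {j0})) \<le> upper_bound n"
      using measure_cone_shell_axis_le[OF A(1) j c _ radii x_out] elim
      unfolding dim by (simp add: upper_bound_def x_out_def power2_eq_square mult_ac)
    ultimately show ?thesis
      by simp
  qed
  ultimately show ?case
    by blast
qed

lemma tendsto_ln_upper_bound:
  assumes K: "K > 0"
  shows "(\<lambda>n. ln (upper_bound n / (K * unit_ball_vol (n - 2))) / real n) \<longlonglongrightarrow> ln \<beta>"
proof -
  have eq: "\<forall>\<^sub>F n in sequentially. 2 * (outer_radius n)\<^sup>2 = 2 * (outer_radius n)\<^sup>2 * real n powr 0"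
    using eventually_gt_at_top[of 0] by eventually_elim simp
  have "(\<lambda>n. 2 * (outer_radius n)\<^sup>2) \<longlonglongrightarrow> 2 * D\<^sup>2"
    by (intro tendsto_intros tendsto_outer_radius)
  then have "(\<lambda>n. 2 * (outer_radius n)\<^sup>2 * real n powr 0) \<longlonglongrightarrow> 2 * D\<^sup>2"
    by (simp only: tendsto_cong[OF eq])
  from tendsto_ln_unit_ball_vol_ratio[OF K this _ tendsto_x_out] show ?thesis
    unfolding upper_bound_def using D_pos \<beta>_pos by simp
qed

lemma tendsto_ln_lower_bound:
  assumes K: "K > 0"
  shows "(\<lambda>n. ln (lower_bound n / (K * unit_ball_vol (n - 2))) / real n) \<longlonglongrightarrow> ln \<beta>"
proof -
  have eq: "\<forall>\<^sub>F n in sequentially. real n * (b_out n - b_in n) = (side n)\<^sup>2 * (b_out n - b_in n) * real n powr 5"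
    using eventually_gt_at_top[of 0]
    by eventually_elim (simp add: side_def powr_realpow power2_eq_square eval_nat_numeral field_simps)
  have "(\<lambda>n. (side n)\<^sup>2 * (b_out n - b_in n) * real n powr 5) \<longlonglongrightarrow> D / \<beta>"
    using tendsto_real_mult_b_gap by (simp only: tendsto_cong[OF eq])
  from tendsto_ln_unit_ball_vol_ratio[OF K this _ tendsto_b_out] show ?thesis
    unfolding lower_bound_def using D_pos \<beta>_pos by simp
qed

theorem tendsto_ln_measure_cone_shell:
  assumes K: "K > 0"
    and A: "\<forall>\<^sub>F n in sequentially. finite (A n) \<and> card (A n) = n - 2 \<and> norm_on (A n) (u n) > 0"
  shows "(\<lambda>n. ln (measure (lborel_Pi (A n))
      (cone_shell (A n) {inner_radius n..<outer_radius n} (cos_seq n) (u n)) / (K * unit_ball_vol (n - 2)))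
      / real n) \<longlonglongrightarrow> ln \<beta>"
proof (rule tendsto_ln_div_real_sandwich[OF _ tendsto_ln_lower_bound[OF K] tendsto_ln_upper_bound[OF K]])
  show "\<forall>\<^sub>F n in sequentially. 0 < lower_bound n / (K * unit_ball_vol (n - 2))
      \<and> lower_bound n / (K * unit_ball_vol (n - 2))
        \<le> measure (lborel_Pi (A n)) (cone_shell (A n) {inner_radius n..<outer_radius n} (cos_seq n) (u n))
          / (K * unit_ball_vol (n - 2))
      \<and> measure (lborel_Pi (A n)) (cone_shell (A n) {inner_radius n..<outer_radius n} (cos_seq n) (u n))
          / (K * unit_ball_vol (n - 2)) \<le> upper_bound n / (K * unit_ball_vol (n - 2))"
    using eventually_measure_cone_shell_bounds A
  proof eventually_elim
    case (elim n)
    moreover have "0 < K * unit_ball_vol (n - 2)"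
      using K by simp
    ultimately show ?case
      by (simp add: divide_right_mono)
  qed
qed

end

section \<open>The sets of the paper\<close>

lemma Rsp_eq_space: "Rsp m = space (lborel_Pi {..<m})"
  by (simp add: Rsp_def space_PiM)

lemma vol_eq_measure: "vol m S = measure (lborel_Pi {..<m}) S"
  by (simp add: vol_def lebm_def)

lemma enorm_eq_norm_on: "enorm m x = norm_on {..<m} x"
  by (simp add: enorm_def norm_on_eq_sqrt_sum)

lemma einner_eq_inner_on: "einner m x y = inner_on {..<m} x y"
  by (simp add: einner_def inner_on_def)

lemma vball_eq_unit_ball_vol: "vball m = unit_ball_vol m"
proof -
  have "oball0 m 1 = {z \<in> space (lborel_Pi {..<m}). norm_on {..<m} z < 1}"
    by (simp add: oball0_def Rsp_eq_space enorm_eq_norm_on)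
  then show ?thesis
    using measure_ball_on[of "{..<m}" 1] by (simp add: vball_def vol_eq_measure)
qed

lemma Dpp_eq_cone_shell:
  "i \<noteq> 0 \<Longrightarrow> Dpp \<rho> k a n i u
     = cone_shell {..<n - 2} {dd \<rho> k a i - 3 / real n..<dd \<rho> k a i - 2 / real n} (costh \<rho> k a n i) u"
  unfolding Dpp_def cone_shell_def Cpp_def oball0_def
  by (auto simp: Rsp_eq_space enorm_eq_norm_on einner_eq_inner_on)

lemma sum_xpp_shift:
  fixes f :: "nat \<Rightarrow> real"
  shows "(\<Sum>j<n - 2. f (j + 2)) = (\<Sum>j\<in>{..<n} - {0, 1}. f j)"
proof -
  have "{..<n} - {0, 1} = (\<lambda>j. j + 2) ` {..<n - 2}"
  proof (rule set_eqI, rule iffI)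
    fix x assume "x \<in> {..<n} - {0, 1}"
    then have "x = (x - 2) + 2" "x - 2 < n - 2" by auto
    then show "x \<in> (\<lambda>j. j + 2) ` {..<n - 2}" by (metis image_eqI lessThan_iff)
  qed auto
  then show ?thesis
    by (simp add: sum.reindex inj_on_def)
qed

lemma norm_on_xpp: "norm_on {..<n - 2} (xpp n x) = norm_on ({..<n} - {0, 1}) x"
  using sum_xpp_shift[of "\<lambda>j. (x j)\<^sup>2" n] by (simp add: norm_on_eq_sqrt_sum xpp_def)

lemma inner_on_xpp: "inner_on {..<n - 2} (xpp n x) (xpp n y) = inner_on ({..<n} - {0, 1}) x y"
  using sum_xpp_shift[of "\<lambda>j. x j * y j" n] by (simp add: inner_on_def xpp_def)

lemma vol_DD_eq_cone_shell:
  assumes "i \<noteq> 0" "2 \<le> n"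
  defines "Rs \<equiv> {..<n} - {0, 1}"
  shows "vol n (DD \<rho> k a n i y) = measure (lborel_Pi Rs)
    (cone_shell Rs {dd \<rho> k a i - 3 / real n..<dd \<rho> k a i - 2 / real n} (costh \<rho> k a n i) y) / real n"
proof -
  let ?C = "cone_shell Rs {dd \<rho> k a i - 3 / real n..<dd \<rho> k a i - 2 / real n} (costh \<rho> k a n i) y"
  have A: "finite {..<n}" "(0::nat) \<in> {..<n}" "(1::nat) \<in> {..<n}" "(0::nat) \<noteq> 1"
    using assms by auto
  have "DD \<rho> k a n i y = {x \<in> space (lborel_Pi {..<n}). x 0 \<in> {0<..<1 / sqrt (real n)}
      \<and> x 1 \<in> {0<..<1 / sqrt (real n)} \<and> restrict x Rs \<in> ?C}"
  proof -
    have "xpp n x \<in> space (lborel_Pi {..<n - 2})" "restrict x Rs \<in> space (lborel_Pi Rs)" for x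
      by (simp_all add: space_PiM xpp_def)
    then show ?thesis
      unfolding DD_def Dpp_eq_cone_shell[OF assms(1)] cone_shell_def Dp_def xp_def
      using assms(1) by (auto simp: Rsp_eq_space norm_on_xpp inner_on_xpp Rs_def)
  qed
  then have "emeasure (lborel_Pi {..<n}) (DD \<rho> k a n i y)
      = ennreal (1 / sqrt (real n)) * (ennreal (1 / sqrt (real n)) * emeasure (lborel_Pi Rs) ?C)"
    using emeasure_PiM_coords_restrict[OF A, of "{0<..<1 / sqrt (real n)}" "{0<..<1 / sqrt (real n)}" ?C]
    by (simp add: Rs_def)
  then have "vol n (DD \<rho> k a n i y) = 1 / sqrt (real n) * (1 / sqrt (real n) * measure (lborel_Pi Rs) ?C)"
    unfolding vol_eq_measure measure_def by (simp add: enn2real_mult)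
  also have "\<dots> = measure (lborel_Pi Rs) ?C / real n"
  proof -
    have "sqrt (real n) * sqrt (real n) = real n" "sqrt (real n) \<noteq> 0"
      using assms(2) by auto
    then show ?thesis
      by (simp add: field_simps)
  qed
  finally show ?thesis .
qed

lemma norm_on_pos_of_CC:
  assumes "i \<noteq> 0" "y \<in> CC \<rho> k a n i" "0 < dd \<rho> k a i - 3 / real n"
  shows "0 < norm_on ({..<n} - {0, 1}) y"
proof -
  have "xpp n y \<in> Cpp \<rho> k a n i"
    using assms(2) by (simp add: CC_def)
  then have "dd \<rho> k a i - 3 / real n \<le> norm_on {..<n - 2} (xpp n y)"
    using assms(1) by (auto simp: Cpp_def oball0_def enorm_eq_norm_on)
  then show ?thesis
    using assms(3) by (simp add: norm_on_xpp)
qed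

lemma rr_pos: "\<rho> > 1 \<Longrightarrow> rr \<rho> k i > 0"
  by (simp add: rr_def)

lemma dd_ge:
  assumes r: "\<rho> > 1" and a: "\<forall>j\<in>{2..k+1}. 0 < a j \<and> a j < 1"
  shows "1 \<le> j \<Longrightarrow> j \<le> k + 1 \<Longrightarrow> 1 + \<rho> \<le> dd \<rho> k a j"
proof (induction j)
  case 0
  then show ?case by simp
next
  case (Suc j)
  show ?case
  proof (cases j)
    case 0
    then show ?thesis by simp
  next
    case (Suc m)
    let ?p = "dd \<rho> k a (Suc m)"
    have p: "1 + \<rho> \<le> ?p"
      using Suc.IH Suc.prems Suc by simp
    have "0 \<le> a (Suc (Suc m))"
      using a[rule_format, of "Suc (Suc m)"] Suc.prems Suc by auto
    then have "0 \<le> 2 * rr \<rho> k (Suc (Suc m)) * a (Suc (Suc m)) * ?p"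
      using rr_pos[OF r, of k "Suc (Suc m)"] p r by (intro mult_nonneg_nonneg) auto
    then have "sqrt (?p\<^sup>2) \<le> dd \<rho> k a (Suc (Suc m))"
      by (simp add: Let_def del: real_sqrt_abs)
    then show ?thesis
      using p r Suc by simp
  qed
qed

lemma dd_sq:
  assumes r: "\<rho> > 1" and a: "\<forall>j\<in>{2..k+1}. 0 < a j \<and> a j < 1" and i: "2 \<le> i" "i \<le> k + 1"
  shows "(dd \<rho> k a i)\<^sup>2 = (dd \<rho> k a (i - 1))\<^sup>2 + 2 * rr \<rho> k i * a i * dd \<rho> k a (i - 1) + (rr \<rho> k i)\<^sup>2"
proof -
  obtain m where m: "i = Suc (Suc m)"
    using i by (metis add_2_eq_Suc le_Suc_ex)
  have "0 \<le> dd \<rho> k a (Suc m)"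
    using dd_ge[OF r a, of "Suc m"] i m r by simp
  then have "0 \<le> 2 * rr \<rho> k i * a i * dd \<rho> k a (Suc m)"
    using rr_pos[OF r, of k i] a[rule_format, of i] i by (intro mult_nonneg_nonneg) auto
  then show ?thesis
    by (simp add: m Let_def)
qed

text \<open>\<open>\<theta>\<^sub>i\<close> tends to the angle at the origin of the triangle with sides \<open>d\<^sub>i\<^sub>-\<^sub>1\<close>, \<open>r\<^sub>i\<close> and
  \<open>d\<^sub>i\<close>; its sine times \<open>d\<^sub>i\<close> is the height \<open>r\<^sub>i \<surd>(1 - a\<^sub>i\<^sup>2)\<close> of that triangle.\<close>

lemma dd_cos_angle:
  assumes r: "\<rho> > 1" and a: "\<forall>j\<in>{2..k+1}. 0 < a j \<and> a j < 1" and i: "2 \<le> i" "i \<le> k + 1"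
  defines "c \<equiv> (dd \<rho> k a (i - 1) + a i * rr \<rho> k i) / dd \<rho> k a i"
  shows "0 < dd \<rho> k a i" "0 < c" "c < 1"
    and "dd \<rho> k a i * sqrt (1 - c\<^sup>2) = rr \<rho> k i * sqrt (1 - (a i)\<^sup>2)"
proof -
  let ?D = "dd \<rho> k a i" and ?Dm = "dd \<rho> k a (i - 1)" and ?r = "rr \<rho> k i"
  show D: "0 < ?D"
    using dd_ge[OF r a, of i] r i by simp
  have "1 \<le> i - 1" "i - 1 \<le> k + 1"
    using i by auto
  then have Dm: "0 < ?Dm"
    using dd_ge[OF r a] r by fastforce
  have ai: "0 < a i" "a i < 1"
    using a i by auto
  have diff: "?D\<^sup>2 - (?Dm + a i * ?r)\<^sup>2 = ?r\<^sup>2 * (1 - (a i)\<^sup>2)"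
    using dd_sq[OF r a i] by (simp add: algebra_simps power2_eq_square)
  moreover have "0 < ?r\<^sup>2 * (1 - (a i)\<^sup>2)"
    using rr_pos[OF r, of k i] ai by (simp add: abs_square_less_1)
  ultimately have "(?Dm + a i * ?r)\<^sup>2 < ?D\<^sup>2"
    by linarith
  then have "?Dm + a i * ?r < ?D"
    using D by (simp add: power2_less_imp_less)
  then show "c < 1"
    unfolding c_def using D by simp
  have "0 < ?Dm + a i * ?r"
    using Dm ai rr_pos[OF r, of k i] by (simp add: add_pos_pos)
  then show "0 < c"
    unfolding c_def using D by simp
  have "?D\<^sup>2 * (1 - c\<^sup>2) = ?D\<^sup>2 - (?Dm + a i * ?r)\<^sup>2"
    using D by (simp add: c_def power_divide algebra_simps)
  also have "\<dots> = ?r\<^sup>2 * (1 - (a i)\<^sup>2)"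
    by (rule diff)
  finally have sq: "?D\<^sup>2 * (1 - c\<^sup>2) = ?r\<^sup>2 * (1 - (a i)\<^sup>2)" .
  have "?D * sqrt (1 - c\<^sup>2) = sqrt (?D\<^sup>2 * (1 - c\<^sup>2))"
    using D by (simp add: real_sqrt_mult)
  also have "\<dots> = ?r * sqrt (1 - (a i)\<^sup>2)"
    using rr_pos[OF r, of k i] by (simp add: sq real_sqrt_mult)
  finally show "?D * sqrt (1 - c\<^sup>2) = ?r * sqrt (1 - (a i)\<^sup>2)" .
qed

lemma eventually_norm_on_CC_pos:
  assumes r: "\<rho> > 1" and a: "\<forall>j\<in>{2..k+1}. 0 < a j \<and> a j < 1" and j: "1 \<le> j" "j \<le> k + 1"
  shows "\<forall>\<^sub>F n in sequentially. \<forall>y\<in>CC \<rho> k a n j. 0 < norm_on ({..<n} - {0, 1}) y"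
proof -
  have "0 < dd \<rho> k a j"
    using dd_ge[OF r a j] r by simp
  then have "\<forall>\<^sub>F n in sequentially. 0 < dd \<rho> k a j - 3 / real n"
    using tendsto_diff[OF tendsto_const tendsto_div_real_zero[OF tendsto_const[of 3]], of "dd \<rho> k a j"]
    by (auto dest: order_tendstoD(1))
  moreover have "j \<noteq> 0"
    using j by simp
  ultimately show ?thesis
    using norm_on_pos_of_CC[of j _ \<rho> k a] by (auto elim: eventually_mono)
qed

context cone_shell_asymptotics
begin

context
  fixes \<rho> :: real and k i :: nat and a :: "nat \<Rightarrow> real"
  assumes i: "i \<noteq> 0" and dd_eq: "dd \<rho> k a i = D" and costh_eq: "\<And>n. costh \<rho> k a n i = cos_seq n"
begin

lemma vol_Dpp_eq_measure_cone_shell: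
  "vol (n - 2) (Dpp \<rho> k a n i (xpp n y))
     = measure (lborel_Pi {..<n - 2}) (cone_shell {..<n - 2} {inner_radius n..<outer_radius n} (cos_seq n) (xpp n y))"
  using i by (simp add: vol_eq_measure Dpp_eq_cone_shell dd_eq costh_eq inner_radius_def outer_radius_def)

lemma vol_DD_eq_measure_cone_shell:
  "2 \<le> n \<Longrightarrow> vol n (DD \<rho> k a n i y) = measure (lborel_Pi ({..<n} - {0, 1}))
     (cone_shell ({..<n} - {0, 1}) {inner_radius n..<outer_radius n} (cos_seq n) y) / real n"
  using i by (simp add: vol_DD_eq_cone_shell dd_eq costh_eq inner_radius_def outer_radius_def)

lemma vol_Dpp_DD_eq:
  assumes "3 \<le> n" "0 < norm_on ({..<n} - {0, 1}) y1" "0 < norm_on ({..<n} - {0, 1}) y2"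
  shows "vol (n - 2) (Dpp \<rho> k a n i (xpp n y1)) = vol (n - 2) (Dpp \<rho> k a n i (xpp n y2))"
    and "vol n (DD \<rho> k a n i y1) = vol n (DD \<rho> k a n i y2)"
proof -
  have "0 \<in> {..<n - 2}" "2 \<in> {..<n} - {0, 1}"
    using assms(1) by auto
  then have "{..<n - 2} \<noteq> {}" "{..<n} - {0, 1} \<noteq> {}"
    by blast+
  then show "vol (n - 2) (Dpp \<rho> k a n i (xpp n y1)) = vol (n - 2) (Dpp \<rho> k a n i (xpp n y2))"
    and "vol n (DD \<rho> k a n i y1) = vol n (DD \<rho> k a n i y2)"
    using assms measure_cone_shell_eq[where A = "{..<n - 2}" and u = "xpp n y1" and v = "xpp n y2"]
      measure_cone_shell_eq[where A = "{..<n} - {0, 1}" and u = y1 and v = y2]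
    by (simp_all add: vol_Dpp_eq_measure_cone_shell vol_DD_eq_measure_cone_shell norm_on_xpp)
qed

lemma tendsto_ln_vol_Dpp:
  assumes "\<forall>\<^sub>F n in sequentially. 0 < norm_on ({..<n} - {0, 1}) (y n)"
  shows "(\<lambda>n. ln (vol (n - 2) (Dpp \<rho> k a n i (xpp n (y n))) / vball (n - 2)) / real n) \<longlonglongrightarrow> ln \<beta>"
  using tendsto_ln_measure_cone_shell[of 1 "\<lambda>n. {..<n - 2}" "\<lambda>n. xpp n (y n)"] assms
  by (simp add: vol_Dpp_eq_measure_cone_shell vball_eq_unit_ball_vol norm_on_xpp)

lemma tendsto_ln_vol_DD:
  assumes "\<forall>\<^sub>F n in sequentially. 0 < norm_on ({..<n} - {0, 1}) (y n)"
  shows "(\<lambda>n. ln (vol n (DD \<rho> k a n i (y n)) / vball n) / real n) \<longlonglongrightarrow> ln \<beta>"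
proof -
  have "\<forall>\<^sub>F n in sequentially. finite ({..<n} - {0, 1}) \<and> card ({..<n} - {0, 1}) = n - 2
      \<and> 0 < norm_on ({..<n} - {0, 1}) (y n)"
    using assms eventually_ge_at_top[of 2] by eventually_elim (simp add: card_Diff_subset)
  from tendsto_ln_measure_cone_shell[of "2 * pi", OF _ this]
  have lim: "(\<lambda>n. ln (measure (lborel_Pi ({..<n} - {0, 1}))
      (cone_shell ({..<n} - {0, 1}) {inner_radius n..<outer_radius n} (cos_seq n) (y n))
      / (2 * pi * unit_ball_vol (real (n - 2)))) / real n) \<longlonglongrightarrow> ln \<beta>"
    by simp
  have "\<forall>\<^sub>F n in sequentially. ln (measure (lborel_Pi ({..<n} - {0, 1}))
      (cone_shell ({..<n} - {0, 1}) {inner_radius n..<outer_radius n} (cos_seq n) (y n))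
      / (2 * pi * unit_ball_vol (real (n - 2)))) / real n = ln (vol n (DD \<rho> k a n i (y n)) / vball n) / real n"
    using eventually_ge_at_top[of 2]
  proof eventually_elim
    case (elim n)
    have "0 < unit_ball_vol (real n)" "0 < real n"
      using elim by auto
    then show ?case
      unfolding vol_DD_eq_measure_cone_shell[OF elim] unit_ball_vol_diff_2[OF elim] vball_eq_unit_ball_vol
      by (simp add: field_simps)
  qed
  from tendsto_cong[OF this] lim show ?thesis
    by simp
qed

end

end

theorem lemma2p13:
  fixes \<rho> \<kappa> :: real and k i :: nat and a :: "nat \<Rightarrow> real"
    and y :: "nat \<Rightarrow> nat \<Rightarrow> real"
  assumes "\<rho> > 1" and "k \<ge> 1"
    and "kappa_c \<rho> k < \<kappa>" and "\<kappa> < 1"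
    and "\<forall>j\<in>{2..k+1}. 0 < a j \<and> a j < 1"
    and "1 < \<kappa> ^ (k + 1) * (1 + \<rho>)\<^sup>2 / (4 * \<rho>) * sqrt (\<Prod>j\<in>{2..k+1}. 1 - (a j)\<^sup>2)"
    and "\<kappa> ^ (k + 1) * (1 + \<rho>)\<^sup>2 / (4 * \<rho>) * sqrt (\<Prod>j\<in>{2..k+1}. 1 - (a j)\<^sup>2)
           < \<kappa> * dd \<rho> k a (k + 1) / (2 * \<rho>)"
    and "i \<in> {2..k+1}"
    and "\<forall>\<^sub>F n in sequentially. y n \<in> CC \<rho> k a n (i - 1)"
  shows "(\<forall>\<^sub>F n in sequentially. \<forall>y1\<in>CC \<rho> k a n (i - 1). \<forall>y2\<in>CC \<rho> k a n (i - 1).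
            vol (n - 2) (Dpp \<rho> k a n i (xpp n y1)) = vol (n - 2) (Dpp \<rho> k a n i (xpp n y2))
          \<and> vol n (DD \<rho> k a n i y1) = vol n (DD \<rho> k a n i y2))
    \<and> ((\<lambda>n. ln (vol (n - 2) (Dpp \<rho> k a n i (xpp n (y n))) / vball (n - 2)) / real n)
          \<longlonglongrightarrow> ln (rr \<rho> k i * sqrt (1 - (a i)\<^sup>2)))
    \<and> ((\<lambda>n. ln (vol n (DD \<rho> k a n i (y n)) / vball n) / real n)
          \<longlonglongrightarrow> ln (rr \<rho> k i * sqrt (1 - (a i)\<^sup>2)))"
proof -
  have r: "\<rho> > 1" and a: "\<forall>j\<in>{2..k+1}. 0 < a j \<and> a j < 1" and i: "2 \<le> i" "i \<le> k + 1"
    using assms by auto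
  define c where "c = (dd \<rho> k a (i - 1) + a i * rr \<rho> k i) / dd \<rho> k a i"
  note angle = dd_cos_angle[OF r a i, folded c_def]
  interpret cone_shell_asymptotics "dd \<rho> k a i" c
    using angle by unfold_locales
  have i0: "i \<noteq> 0"
    using i by simp
  have costh: "costh \<rho> k a n i = cos_seq n" for n
    unfolding cos_seq_def by (simp add: costh_def c_def mult.commute)
  have \<beta>: "\<beta> = rr \<rho> k i * sqrt (1 - (a i)\<^sup>2)"
    using angle(4) by (simp add: \<beta>_def)
  have pos: "\<forall>\<^sub>F n in sequentially. \<forall>y\<in>CC \<rho> k a n (i - 1). 0 < norm_on ({..<n} - {0, 1}) y"
    using eventually_norm_on_CC_pos[OF r a, of "i - 1"] i by simp
  then have "\<forall>\<^sub>F n in sequentially. \<forall>y1\<in>CC \<rho> k a n (i - 1). \<forall>y2\<in>CC \<rho> k a n (i - 1).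
      vol (n - 2) (Dpp \<rho> k a n i (xpp n y1)) = vol (n - 2) (Dpp \<rho> k a n i (xpp n y2))
      \<and> vol n (DD \<rho> k a n i y1) = vol n (DD \<rho> k a n i y2)"
    using eventually_ge_at_top[of 3] by eventually_elim (simp add: vol_Dpp_DD_eq[OF i0 refl costh])
  moreover have "\<forall>\<^sub>F n in sequentially. 0 < norm_on ({..<n} - {0, 1}) (y n)"
    using pos assms(9) by eventually_elim simp
  ultimately show ?thesis
    using tendsto_ln_vol_Dpp[OF i0 refl costh] tendsto_ln_vol_DD[OF i0 refl costh] \<beta> by simp
qed

end
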